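(* For all integers $m,n\ge2$, the (unnormalized) diagonal positive matrices in $M_m(\mathbb{C})\otimes M_n(\mathbb{C})$ $$\rho_1=\operatorname{diag}(\sqrt2+1,\sqrt2+1,1,\dots,1),\qquad \rho_2=\operatorname{diag}(2,2,2,1,\dots,1)$$ are absolutely PPT; that is, for every unitary $U$ of order $mn$, both $(U\rho_1U^\dagger)^\Gamma\ge0$ and $(U\rho_2U^\dagger)^\Gamma\ge0$.
   Context: The partial transpose is $M^\Gamma:=(T\otimes\mathrm{id})(M)$ with $T$ the transpose on the first factor $M_m(\mathbb{C})$. A (possibly unnormalized) positive semidefinite matrix $\rho$ is absolutely PPT if $(U\rho U^\dagger)^\Gamma$ is positive semidefinite for every global unitary $U$ on $\mathbb{C}^m\otimes\mathbb{C}^n$. *)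

theory Defs
  imports "Jordan_Normal_Form.Matrix" Complex_Main
begin

text \<open>Matrices in M_m(C) (x) M_n(C) are (m*n) x (m*n) complex matrices; the basis vector
  e_i (x) e_j (i < m, j < n) has flat index i*n + j (Kronecker ordering).\<close>

definition adjoint_mat :: "complex mat \<Rightarrow> complex mat" where
  "adjoint_mat A = mat (dim_col A) (dim_row A) (\<lambda>(i,j). cnj (A $$ (j,i)))"

definition unitary_mat :: "nat \<Rightarrow> complex mat \<Rightarrow> bool" where
  "unitary_mat d U \<longleftrightarrow> U \<in> carrier_mat d d \<and> U * adjoint_mat U = 1\<^sub>m d \<and> adjoint_mat U * U = 1\<^sub>m d"

definition psd_mat :: "nat \<Rightarrow> complex mat \<Rightarrow> bool" where
  "psd_mat d A \<longleftrightarrow> A \<in> carrier_mat d d \<and>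
     (\<forall>v \<in> carrier_vec d.
        let q = (\<Sum>i<d. \<Sum>j<d. cnj (v $ i) * A $$ (i,j) * v $ j)
        in Im q = 0 \<and> Re q \<ge> 0)"

text \<open>Partial transpose on the first factor M_m(C).
  (M^Gamma)_{(i,j),(k,l)} = M_{(k,j),(i,l)}.\<close>
definition partial_transpose :: "nat \<Rightarrow> nat \<Rightarrow> complex mat \<Rightarrow> complex mat" where
  "partial_transpose m n M = mat (m*n) (m*n)
     (\<lambda>(a,b). M $$ ((b div n) * n + a mod n, (a div n) * n + b mod n))"

definition absolutely_PPT :: "nat \<Rightarrow> nat \<Rightarrow> complex mat \<Rightarrow> bool" where
  "absolutely_PPT m n \<rho> \<longleftrightarrow> psd_mat (m*n) \<rho> \<and>
     (\<forall>U. unitary_mat (m*n) U \<longrightarrow>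
        psd_mat (m*n) (partial_transpose m n (U * \<rho> * adjoint_mat U)))"

definition diag_mat_of :: "nat \<Rightarrow> (nat \<Rightarrow> complex) \<Rightarrow> complex mat" where
  "diag_mat_of d f = mat d d (\<lambda>(i,j). if i = j then f i else 0)"

definition rho1 :: "nat \<Rightarrow> nat \<Rightarrow> complex mat" where
  "rho1 m n = diag_mat_of (m*n) (\<lambda>i. if i < 2 then complex_of_real (sqrt 2 + 1) else 1)"

definition rho2 :: "nat \<Rightarrow> nat \<Rightarrow> complex mat" where
  "rho2 m n = diag_mat_of (m*n) (\<lambda>i. if i < 3 then 2 else 1)"

end

(*
  Write rho = I + mu P, with P the projection onto the first r basis vectors
  (r = 2, mu = sqrt 2 for rho1 and r = 3, mu = 1 for rho2).  For a unitary U with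
  columns u_t, (U rho U^* )^Gamma = I + mu * sum_{t<r} (u_t u_t^* )^Gamma, so it suffices that
  - sum_{t<r} v^* (u_t u_t^* )^Gamma v <= |v|^2 / mu for every v.

  In a Schmidt basis v = sum_p sigma_p a_p (x) b_p the partial transpose only swaps the
  coefficients of a_p (x) b_q and a_q (x) b_p.  Bessel's inequality then bounds the
  left-hand side by (1/2) sum_{p,q} T_pq sigma_p sigma_q with symmetric weights
  0 <= T_pq <= 1, T_pp = 0 and total weight at most 2r.  Maximising this quadratic form
  over such weights gives sqrt 2 * sum_p sigma_p^2 when the total is 4 and
  2 * sum_p sigma_p^2 when it is 6, which is exactly what is needed.
*)
theory Submission
  imports Defs "Jordan_Normal_Form.Spectral_Radius"
begin

section \<open>Adjoints, unitary matrices and the spectral theorem\<close>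

lemma adjoint_mat_dim [simp]:
  "dim_row (adjoint_mat A) = dim_col A" "dim_col (adjoint_mat A) = dim_row A"
  by (auto simp: adjoint_mat_def)

lemma adjoint_mat_index [simp]:
  "i < dim_col A \<Longrightarrow> j < dim_row A \<Longrightarrow> adjoint_mat A $$ (i,j) = cnj (A $$ (j,i))"
  by (auto simp: adjoint_mat_def)

lemma adjoint_mat_carrier [simp]: "A \<in> carrier_mat n k \<Longrightarrow> adjoint_mat A \<in> carrier_mat k n"
  by (intro carrier_matI) (auto dest: carrier_matD)

lemma adjoint_mat_adjoint [simp]: "adjoint_mat (adjoint_mat A) = A"
  by (intro eq_matI) auto

lemma adjoint_mat_mult:
  assumes "A \<in> carrier_mat n k" "B \<in> carrier_mat k l"
  shows "adjoint_mat (A * B) = adjoint_mat B * adjoint_mat A"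
  using assms by (intro eq_matI) (auto simp: scalar_prod_def cnj_sum mult.commute)

lemma unitary_mat_carrier: "unitary_mat d U \<Longrightarrow> U \<in> carrier_mat d d"
  by (simp add: unitary_mat_def)

lemma unitary_mat_mult:
  assumes A: "unitary_mat d A" and B: "unitary_mat d B"
  shows "unitary_mat d (A * B)"
proof -
  have Ac: "A \<in> carrier_mat d d" and Bc: "B \<in> carrier_mat d d"
    using A B by (simp_all add: unitary_mat_carrier)
  note assoc = assoc_mult_mat[of _ d d _ d _ d] mult_carrier_mat[of _ d d]
  have "A * B * adjoint_mat (A * B) = A * (B * adjoint_mat B) * adjoint_mat A"
    and "adjoint_mat (A * B) * (A * B) = adjoint_mat B * (adjoint_mat A * A) * B"
    using Ac Bc by (simp_all add: adjoint_mat_mult assoc)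
  then show ?thesis
    using A B Ac Bc unfolding unitary_mat_def by simp
qed

definition block_diag :: "nat \<Rightarrow> complex \<Rightarrow> complex mat \<Rightarrow> complex mat" where
  "block_diag n x M = mat (Suc n) (Suc n)
     (\<lambda>(i,j). if i = 0 \<and> j = 0 then x else if i = 0 \<or> j = 0 then 0 else M $$ (i - 1, j - 1))"

lemma block_diag_carrier [simp]: "block_diag n x M \<in> carrier_mat (Suc n) (Suc n)"
  and block_diag_dim [simp]: "dim_row (block_diag n x M) = Suc n" "dim_col (block_diag n x M) = Suc n"
  by (auto simp: block_diag_def)

lemma block_diag_index:
  "i < Suc n \<Longrightarrow> j < Suc n \<Longrightarrow> block_diag n x M $$ (i,j) =
     (if i = 0 \<and> j = 0 then x else if i = 0 \<or> j = 0 then 0 else M $$ (i - 1, j - 1))"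
  by (auto simp: block_diag_def)

lemma block_diag_index_simps [simp]:
  "block_diag n x M $$ (0,0) = x"
  "j < n \<Longrightarrow> block_diag n x M $$ (0, Suc j) = 0"
  "i < n \<Longrightarrow> block_diag n x M $$ (Suc i, 0) = 0"
  "i < n \<Longrightarrow> j < n \<Longrightarrow> block_diag n x M $$ (Suc i, Suc j) = M $$ (i,j)"
  by (auto simp: block_diag_def)

lemma block_diag_mult:
  assumes "A \<in> carrier_mat n n" "B \<in> carrier_mat n n"
  shows "block_diag n x A * block_diag n y B = block_diag n (x * y) (A * B)"
proof (intro eq_matI)
  fix i j assume "i < dim_row (block_diag n (x*y) (A*B))" "j < dim_col (block_diag n (x*y) (A*B))"
  then have i: "i < Suc n" and j: "j < Suc n" by auto
  let ?s = "\<Sum>k<n. block_diag n x A $$ (i, Suc k) * block_diag n y B $$ (Suc k, j)"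
  have "(block_diag n x A * block_diag n y B) $$ (i,j) =
      (\<Sum>k<Suc n. block_diag n x A $$ (i,k) * block_diag n y B $$ (k,j))"
    using i j by (simp add: scalar_prod_def atLeast0LessThan)
  also have "\<dots> = block_diag n x A $$ (i,0) * block_diag n y B $$ (0,j) + ?s"
    by (rule sum.lessThan_Suc_shift)
  also have "\<dots> = block_diag n (x*y) (A*B) $$ (i,j)"
  proof (cases i; cases j)
    fix i' j' assume ij: "i = Suc i'" "j = Suc j'"
    have "?s = (\<Sum>k<n. A $$ (i',k) * B $$ (k,j'))"
      using ij i j by (intro sum.cong) auto
    then show ?thesis using ij i j assms by (simp add: scalar_prod_def atLeast0LessThan)
  qed (use i j in \<open>auto intro!: sum.neutral\<close>)
  finally show "(block_diag n x A * block_diag n y B) $$ (i,j) = block_diag n (x*y) (A*B) $$ (i,j)" .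
qed auto

lemma adjoint_block_diag:
  "A \<in> carrier_mat n n \<Longrightarrow> adjoint_mat (block_diag n x A) = block_diag n (cnj x) (adjoint_mat A)"
  by (intro eq_matI) (auto simp: block_diag_index)

lemma unitary_block_diag:
  assumes "unitary_mat n C"
  shows "unitary_mat (Suc n) (block_diag n 1 C)"
proof -
  have C: "C \<in> carrier_mat n n" and CC: "C * adjoint_mat C = 1\<^sub>m n" "adjoint_mat C * C = 1\<^sub>m n"
    using assms unfolding unitary_mat_def by auto
  have one: "block_diag n 1 (1\<^sub>m n) = 1\<^sub>m (Suc n)"
    by (intro eq_matI) (auto simp: block_diag_index)
  show ?thesis
    unfolding unitary_mat_def adjoint_block_diag[OF C]
    using block_diag_mult[OF C adjoint_mat_carrier[OF C], of 1 1]
      block_diag_mult[OF adjoint_mat_carrier[OF C] C, of 1 1] CC one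
    by simp
qed

lemma mult_cnj_eq_cmod_sq: "z * cnj z = complex_of_real ((cmod z)\<^sup>2)"
  using complex_norm_square by (simp add: mult.commute)

lemma cnj_mult_self: "cnj z * z = complex_of_real ((cmod z)\<^sup>2)"
  by (simp add: mult.commute mult_cnj_eq_cmod_sq)

text \<open>A Householder reflection: \<open>I - 2 w w\<^sup>* / (w\<^sup>* w)\<close> with \<open>w = e\<^sub>0 - z\<close>
  maps \<open>e\<^sub>0\<close> to \<open>z\<close> because \<open>z\<^sub>0\<close> is real.\<close>
lemma unitary_with_first_col:
  fixes z :: "nat \<Rightarrow> complex"
  assumes unit: "(\<Sum>i<N. z i * cnj (z i)) = 1" and z0: "Im (z 0) = 0" and N: "0 < N"
  shows "\<exists>W. unitary_mat N W \<and> (\<forall>i<N. W $$ (i,0) = z i)"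
proof -
  define w where "w i = (if i = 0 then 1 else 0) - z i" for i
  define c where "c = (\<Sum>i<N. w i * cnj (w i))"
  define a where "a = (if c = 0 then 0 else 2 / c)"
  define W where "W = mat N N (\<lambda>(i,j). (if i = j then 1 else 0) - a * w i * cnj (w j))"
  have cz0: "cnj (z 0) = z 0" using z0 by (simp add: complex_eq_iff)
  have cnj_c: "cnj c = c" unfolding c_def by (simp add: cnj_sum mult.commute)
  have cnj_a: "cnj a = a" by (simp add: a_def cnj_c)
  have "c = (\<Sum>i<N. (if i = 0 then 1 - cnj (z 0) - z 0 else 0) + z i * cnj (z i))"
    unfolding c_def by (intro sum.cong) (auto simp: w_def algebra_simps)
  also have "\<dots> = 2 - 2 * z 0" using N unit cz0 by (simp add: sum.distrib)
  finally have c2: "c = 2 * w 0" by (simp add: w_def)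
  have Wc: "W \<in> carrier_mat N N" by (simp add: W_def)
  have Wij: "W $$ (p,q) = (if p = q then 1 else 0) - a * w p * cnj (w q)" if "p < N" "q < N" for p q
    using that by (simp add: W_def)
  have adjW: "adjoint_mat W = W"
    by (intro eq_matI) (auto simp: W_def cnj_a mult_ac)
  have WW: "W * W = 1\<^sub>m N"
  proof (intro eq_matI)
    fix i j assume "i < dim_row (1\<^sub>m N)" "j < dim_col (1\<^sub>m N)"
    then have i: "i < N" and j: "j < N" by auto
    have "(W * W) $$ (i,j) = (\<Sum>k<N. W $$ (i,k) * W $$ (k,j))"
      using i j Wc by (simp add: scalar_prod_def atLeast0LessThan)
    also have "\<dots> = (\<Sum>k<N. (if k = i then (if i = j then 1 else 0) - a * w i * cnj (w j) else 0)
         - (if k = j then a * w i * cnj (w j) else 0) + a * a * w i * cnj (w j) * (w k * cnj (w k)))"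
      by (intro sum.cong refl, simp add: Wij i j) (auto simp: algebra_simps)
    also have "\<dots> = (if i = j then 1 else 0) - 2 * a * w i * cnj (w j) + a * a * w i * cnj (w j) * c"
      using i j by (simp add: sum.distrib sum_subtractf sum_distrib_left[symmetric] c_def)
    also have "\<dots> = (if i = j then 1 else 0)"
      by (cases "c = 0") (auto simp: a_def field_simps)
    finally show "(W * W) $$ (i,j) = 1\<^sub>m N $$ (i,j)" using i j by simp
  qed (use Wc in auto)
  have "W $$ (i,0) = z i" if i: "i < N" for i
  proof (cases "c = 0")
    case True
    then have "(\<Sum>i<N. (cmod (w i))\<^sup>2) = 0"
      unfolding c_def mult_cnj_eq_cmod_sq of_real_sum[symmetric] by (simp only: of_real_eq_0_iff)
    then have "w i = 0" using i by (simp add: sum_nonneg_eq_0_iff)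
    then show ?thesis using True i N by (simp add: Wij a_def w_def)
  next
    case False
    then have "w 0 \<noteq> 0" using c2 by auto
    moreover have "cnj (w 0) = w 0" using cz0 by (simp add: w_def)
    ultimately have "a * w i * cnj (w 0) = w i"
      using c2 False by (simp add: a_def field_simps)
    then have "W $$ (i,0) = (if i = 0 then 1 else 0) - w i"
      using i N by (simp add: Wij)
    then show ?thesis by (simp add: w_def)
  qed
  moreover have "unitary_mat N W" unfolding unitary_mat_def using Wc adjW WW by simp
  ultimately show ?thesis by blast
qed

lemma unit_eigenvector_with_real_head:
  assumes K: "K \<in> carrier_mat (Suc n) (Suc n)"
  obtains e z where "z \<in> carrier_vec (Suc n)" "K *\<^sub>v z = e \<cdot>\<^sub>v z"
    "(\<Sum>i<Suc n. z $ i * cnj (z $ i)) = 1" "Im (z $ 0) = 0"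
proof -
  obtain e where "eigenvalue K e" using spectrum_non_empty[OF K] unfolding spectrum_def by auto
  then obtain v where v: "v \<in> carrier_vec (Suc n)" "v \<noteq> 0\<^sub>v (Suc n)" "K *\<^sub>v v = e \<cdot>\<^sub>v v"
    unfolding eigenvalue_def eigenvector_def using K by auto
  define s where "s = (\<Sum>i<Suc n. (cmod (v $ i))\<^sup>2)"
  obtain i0 where i0: "i0 < Suc n" "v $ i0 \<noteq> 0"
    using v(1,2) by (metis eq_vecI carrier_vecD index_zero_vec)
  have s: "s > 0" unfolding s_def by (rule sum_pos2[of _ i0]) (use i0 in auto)
  define ph where "ph = (if v $ 0 = 0 then 1 else cnj (v $ 0) / complex_of_real (cmod (v $ 0)))"
  have vv: "v $ 0 * cnj (v $ 0) = complex_of_real (cmod (v $ 0)) * complex_of_real (cmod (v $ 0))"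
    by (simp add: mult_cnj_eq_cmod_sq power2_eq_square)
  have ph1: "ph * cnj ph = 1" using vv by (auto simp: ph_def field_simps)
  define z where "z = (ph / complex_of_real (sqrt s)) \<cdot>\<^sub>v v"
  show ?thesis
  proof (rule that[of z e])
    show "z \<in> carrier_vec (Suc n)" using v by (simp add: z_def)
    show "K *\<^sub>v z = e \<cdot>\<^sub>v z"
      unfolding z_def using mult_mat_vec[OF K v(1)] v(3) by (simp add: smult_smult_assoc mult.commute)
    have "(\<Sum>i<Suc n. z $ i * cnj (z $ i)) =
        (\<Sum>i<Suc n. (ph * cnj ph) / complex_of_real s * (v $ i * cnj (v $ i)))"
      using v(1) s
      by (intro sum.cong refl) (auto simp: z_def field_simps real_sqrt_mult[symmetric] simp flip: of_real_mult)
    also have "\<dots> = 1 / complex_of_real s * (\<Sum>i<Suc n. v $ i * cnj (v $ i))"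
      unfolding ph1 sum_distrib_left by simp
    also have "(\<Sum>i<Suc n. v $ i * cnj (v $ i)) = complex_of_real s"
      unfolding s_def mult_cnj_eq_cmod_sq by (simp add: of_real_sum)
    finally show "(\<Sum>i<Suc n. z $ i * cnj (z $ i)) = 1" using s by simp
    show "Im (z $ 0) = 0"
    proof (cases "v $ 0 = 0")
      case False
      have "ph * v $ 0 = complex_of_real (cmod (v $ 0))"
        using False vv by (simp add: ph_def field_simps)
      then have "z $ 0 = complex_of_real (cmod (v $ 0) / sqrt s)" using v(1) by (simp add: z_def)
      then show ?thesis by simp
    qed (use v(1) in \<open>simp add: z_def\<close>)
  qed
qed

lemma unitary_conj_eigenvector_col:
  assumes W: "unitary_mat N W" and K: "K \<in> carrier_mat N N"
    and z: "col W 0 = z" "K *\<^sub>v z = e \<cdot>\<^sub>v z" and i: "i < N" and N: "0 < N"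
  shows "(adjoint_mat W * K * W) $$ (i,0) = (if i = 0 then e else 0)"
proof -
  have Wc: "W \<in> carrier_mat N N" and WW: "adjoint_mat W * W = 1\<^sub>m N"
    using W unfolding unitary_mat_def by auto
  have aWc: "adjoint_mat W \<in> carrier_mat N N" using Wc by simp
  have zc: "z \<in> carrier_vec N" using z(1) Wc by auto
  define M where "M = adjoint_mat W * K * W"
  have Mc: "M \<in> carrier_mat N N"
    unfolding M_def using mult_carrier_mat[OF mult_carrier_mat[OF aWc K] Wc] .
  have "col M 0 = (adjoint_mat W * K) *\<^sub>v col W 0"
    unfolding M_def using Wc aWc K N by (intro col_mult2) auto
  also have "\<dots> = adjoint_mat W *\<^sub>v (K *\<^sub>v z)"
    using aWc K zc z(1) by simp
  also have "\<dots> = e \<cdot>\<^sub>v (adjoint_mat W *\<^sub>v col W 0)"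
    using aWc zc z by (simp add: mult_mat_vec)
  also have "adjoint_mat W *\<^sub>v col W 0 = col (adjoint_mat W * W) 0"
    using aWc Wc N by (intro col_mult2[symmetric]) auto
  finally have "col M 0 = e \<cdot>\<^sub>v unit_vec N 0" unfolding WW using N by simp
  then have "M $$ (i,0) = (e \<cdot>\<^sub>v unit_vec N 0) $ i"
    using Mc i N by (metis carrier_matD index_col)
  then show ?thesis using i by (simp add: M_def)
qed

lemma hermitian_first_col_block_diag:
  assumes K: "K \<in> carrier_mat (Suc n) (Suc n)" and hK: "adjoint_mat K = K"
    and col0: "\<And>i. 0 < i \<Longrightarrow> i < Suc n \<Longrightarrow> K $$ (i,0) = 0"
  obtains K' where "K' \<in> carrier_mat n n" "adjoint_mat K' = K'" "K = block_diag n (K $$ (0,0)) K'"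
proof
  define K' where "K' = mat n n (\<lambda>(i,j). K $$ (Suc i, Suc j))"
  show "K' \<in> carrier_mat n n" by (simp add: K'_def)
  have herm: "cnj (K $$ (j,i)) = K $$ (i,j)" if "i < Suc n" "j < Suc n" for i j
    using that K arg_cong[OF hK, of "\<lambda>A. A $$ (i,j)"] by simp
  have row0: "K $$ (0,j) = 0" if "0 < j" "j < Suc n" for j
    using herm[of 0 j] col0[OF that] that by simp
  show "adjoint_mat K' = K'" "K = block_diag n (K $$ (0,0)) K'"
    using K col0 row0 herm by (auto intro!: eq_matI simp: K'_def block_diag_index split: nat.split)
qed

lemma hermitian_unitarily_diagonalizable:
  assumes "K \<in> carrier_mat n n" "adjoint_mat K = K"
  shows "\<exists>C. unitary_mat n C \<and> (\<forall>i<n. \<forall>j<n. i \<noteq> j \<longrightarrow> (adjoint_mat C * K * C) $$ (i,j) = 0)"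
  using assms
proof (induction n arbitrary: K)
  case 0
  then show ?case by (intro exI[of _ "1\<^sub>m 0"]) (auto simp: unitary_mat_def)
next
  case (Suc n)
  have K: "K \<in> carrier_mat (Suc n) (Suc n)" and hK: "adjoint_mat K = K" using Suc.prems by auto
  obtain e z where z: "z \<in> carrier_vec (Suc n)" "K *\<^sub>v z = e \<cdot>\<^sub>v z"
    "(\<Sum>i<Suc n. z $ i * cnj (z $ i)) = 1" "Im (z $ 0) = 0"
    using unit_eigenvector_with_real_head[OF K] .
  obtain W where W: "unitary_mat (Suc n) W" and Wcol: "\<forall>i<Suc n. W $$ (i,0) = z $ i"
    using unitary_with_first_col[of "\<lambda>i. z $ i" "Suc n"] z(3,4) by auto
  have Wc: "W \<in> carrier_mat (Suc n) (Suc n)" using W by (rule unitary_mat_carrier)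
  have "col W 0 = z" using Wcol Wc z(1) by (intro eq_vecI) auto
  note assoc = assoc_mult_mat[of _ "Suc n" "Suc n" _ "Suc n" _ "Suc n"] mult_carrier_mat[of _ "Suc n" "Suc n"]
    adjoint_mat_mult[of _ "Suc n" "Suc n" _ "Suc n"]
  define K1 where "K1 = adjoint_mat W * K * W"
  have K1c: "K1 \<in> carrier_mat (Suc n) (Suc n)" using Wc K by (simp add: K1_def assoc)
  have "adjoint_mat K1 = K1"
    using Wc K by (simp add: K1_def hK assoc)
  moreover have "K1 $$ (i,0) = 0" if "0 < i" "i < Suc n" for i
    using unitary_conj_eigenvector_col[OF W K \<open>col W 0 = z\<close> z(2) that(2)] that by (simp add: K1_def)
  ultimately obtain K' where K': "K' \<in> carrier_mat n n" "adjoint_mat K' = K'"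
    and K1: "K1 = block_diag n (K1 $$ (0,0)) K'"
    using hermitian_first_col_block_diag[OF K1c] by blast
  obtain C where C: "unitary_mat n C"
    and offd: "\<forall>i<n. \<forall>j<n. i \<noteq> j \<longrightarrow> (adjoint_mat C * K' * C) $$ (i,j) = 0"
    using Suc.IH[OF K'] by blast
  have Cc: "C \<in> carrier_mat n n" using C by (rule unitary_mat_carrier)
  define B where "B = block_diag n 1 C"
  have Bc: "B \<in> carrier_mat (Suc n) (Suc n)" by (simp add: B_def)
  have "adjoint_mat (W * B) * K * (W * B) = adjoint_mat B * K1 * B"
    using Wc Bc K by (simp add: K1_def assoc)
  also have "\<dots> = block_diag n (K1 $$ (0,0)) (adjoint_mat C * K' * C)"
    using Cc K' by (subst K1) (simp add: B_def adjoint_block_diag block_diag_mult mult_carrier_mat[of _ n n])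
  finally have eq: "adjoint_mat (W * B) * K * (W * B) = block_diag n (K1 $$ (0,0)) (adjoint_mat C * K' * C)" .
  show ?case
  proof (intro exI[of _ "W * B"] conjI allI impI)
    show "unitary_mat (Suc n) (W * B)"
      unfolding B_def by (intro unitary_mat_mult W unitary_block_diag C)
    fix i j assume "i < Suc n" "j < Suc n" "i \<noteq> j"
    then show "(adjoint_mat (W * B) * K * (W * B)) $$ (i,j) = 0"
      unfolding eq using offd by (auto simp: block_diag_index)
  qed
qed

section \<open>Inner products, Bessel's inequality and the Schmidt decomposition\<close>

definition cinner :: "nat \<Rightarrow> (nat \<Rightarrow> complex) \<Rightarrow> (nat \<Rightarrow> complex) \<Rightarrow> complex" where
  "cinner N x y = (\<Sum>a<N. cnj (x a) * y a)"

lemma cnj_cinner: "cnj (cinner N x y) = cinner N y x"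
  by (simp add: cinner_def cnj_sum mult.commute)

lemma cinner_sum_right: "cinner N x (\<lambda>a. \<Sum>j\<in>J. f j * y j a) = (\<Sum>j\<in>J. f j * cinner N x (y j))"
proof -
  have "cinner N x (\<lambda>a. \<Sum>j\<in>J. f j * y j a) = (\<Sum>a<N. \<Sum>j\<in>J. f j * (cnj (x a) * y j a))"
    unfolding cinner_def by (simp add: sum_distrib_left mult.left_commute)
  also have "\<dots> = (\<Sum>j\<in>J. \<Sum>a<N. f j * (cnj (x a) * y j a))" by (rule sum.swap)
  finally show ?thesis by (simp add: cinner_def sum_distrib_left)
qed

lemma cinner_sum_left: "cinner N (\<lambda>a. \<Sum>j\<in>J. f j * y j a) x = (\<Sum>j\<in>J. cnj (f j) * cinner N (y j) x)"
proof -
  have "cinner N (\<lambda>a. \<Sum>j\<in>J. f j * y j a) x = cnj (cinner N x (\<lambda>a. \<Sum>j\<in>J. f j * y j a))"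
    by (simp add: cnj_cinner)
  also have "\<dots> = (\<Sum>j\<in>J. cnj (f j) * cinner N (y j) x)"
    unfolding cinner_sum_right cnj_sum by (simp add: cnj_cinner)
  finally show ?thesis .
qed

lemma cinner_diff_left: "cinner N (\<lambda>a. x a - y a) z = cinner N x z - cinner N y z"
  and cinner_diff_right: "cinner N z (\<lambda>a. x a - y a) = cinner N z x - cinner N z y"
  by (simp_all add: cinner_def algebra_simps sum_subtractf)

lemma cinner_scale_left: "cinner N (\<lambda>a. c * x a) y = cnj c * cinner N x y"
  and cinner_scale_right: "cinner N x (\<lambda>a. c * y a) = c * cinner N x y"
  by (simp_all add: cinner_def sum_distrib_left mult_ac)

lemma cinner_add_left:
  "cinner N (\<lambda>a. \<alpha> * x a + \<beta> * y a) w = cnj \<alpha> * cinner N x w + cnj \<beta> * cinner N y w"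
  by (simp add: cinner_def sum_distrib_left sum.distrib algebra_simps)

lemma cinner_add_self:
  "cinner N (\<lambda>a. \<alpha> * x a + \<beta> * y a) (\<lambda>a. \<alpha> * x a + \<beta> * y a) =
   cnj \<alpha> * \<alpha> * cinner N x x + cnj \<alpha> * \<beta> * cinner N x y + cnj \<beta> * \<alpha> * cinner N y x + cnj \<beta> * \<beta> * cinner N y y"
  by (simp add: cinner_def sum_distrib_left sum.distrib algebra_simps)

lemma cinner_self: "cinner N z z = complex_of_real (\<Sum>a<N. (cmod (z a))\<^sup>2)"
  unfolding cinner_def by (simp add: of_real_sum mult.commute mult_cnj_eq_cmod_sq)

lemma bessel_inequality:
  fixes e :: "'i \<Rightarrow> nat \<Rightarrow> complex"
  assumes fin: "finite I"
    and orth: "\<And>i j. i \<in> I \<Longrightarrow> j \<in> I \<Longrightarrow> cinner N (e i) (e j) = (if i = j then 1 else 0)"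
  shows "(\<Sum>i\<in>I. (cmod (cinner N (e i) z))\<^sup>2) \<le> Re (cinner N z z)"
proof -
  define c where "c i = cinner N (e i) z" for i
  define s where "s a = (\<Sum>i\<in>I. c i * e i a)" for a
  have es: "cinner N (e i) s = c i" if "i \<in> I" for i
  proof -
    have "cinner N (e i) s = (\<Sum>j\<in>I. if j = i then c j else 0)"
      unfolding s_def cinner_sum_right using that orth by (intro sum.cong) auto
    then show ?thesis using fin that by simp
  qed
  have zs: "cinner N z s = (\<Sum>i\<in>I. c i * cnj (c i))"
    unfolding s_def cinner_sum_right c_def by (simp add: cnj_cinner)
  have sz: "cinner N s z = (\<Sum>i\<in>I. c i * cnj (c i))"
    unfolding s_def cinner_sum_left by (simp add: c_def mult.commute)
  have ss: "cinner N s s = (\<Sum>i\<in>I. c i * cnj (c i))"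
    unfolding s_def[abs_def] cinner_sum_left using es by (simp add: s_def[symmetric] mult.commute)
  have "cinner N (\<lambda>a. z a - s a) (\<lambda>a. z a - s a) = cinner N z z - (\<Sum>i\<in>I. c i * cnj (c i))"
    using zs sz ss by (simp add: cinner_diff_left cinner_diff_right)
  moreover have "Re (\<Sum>i\<in>I. c i * cnj (c i)) = (\<Sum>i\<in>I. (cmod (c i))\<^sup>2)"
    by (simp add: mult_cnj_eq_cmod_sq)
  moreover have "0 \<le> Re (cinner N (\<lambda>a. z a - s a) (\<lambda>a. z a - s a))"
    unfolding cinner_self by (simp add: sum_nonneg)
  ultimately show ?thesis by (simp add: c_def)
qed

lemma cinner_self_real_nonneg:
  assumes "cinner N x x = complex_of_real X" shows "0 \<le> X"
proof -
  have "X = (\<Sum>a<N. (cmod (x a))\<^sup>2)" using assms cinner_self[of N x] of_real_eq_iff by metis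
  then show ?thesis by (simp add: sum_nonneg)
qed

lemma bessel_single:
  fixes u :: "nat \<Rightarrow> nat \<Rightarrow> complex"
  assumes orth: "\<And>s t. s < r \<Longrightarrow> t < r \<Longrightarrow> cinner N (u s) (u t) = (if s = t then 1 else 0)"
    and x: "cinner N x x = complex_of_real X"
  shows "(\<Sum>t<r. (cmod (cinner N x (u t)))\<^sup>2) \<le> X"
proof -
  have "(\<Sum>t\<in>{..<r}. (cmod (cinner N (u t) x))\<^sup>2) \<le> Re (cinner N x x)"
    by (rule bessel_inequality) (use orth in auto)
  moreover have "cmod (cinner N (u t) x) = cmod (cinner N x (u t))" for t
    by (metis complex_mod_cnj cnj_cinner)
  ultimately show ?thesis using x by simp
qed

lemma sum_flat_index:
  fixes m n :: nat
  shows "(\<Sum>a<m*n. f a) = (\<Sum>i<m. \<Sum>j<n. f (i*n + j))"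
proof -
  have "(\<Sum>a<m*n. f a) = (\<Sum>i<m. sum f {i*n..<i*n+n})" by (rule sum.nat_group[symmetric])
  also have "\<dots> = (\<Sum>i<m. \<Sum>j<n. f (i*n + j))"
  proof (rule sum.cong[OF refl])
    fix i
    have "sum f {i*n..<i*n+n} = sum (f \<circ> plus (i*n)) {0..<i*n+n-i*n}" by (rule sum.atLeastLessThan_shift_0)
    then show "sum f {i*n..<i*n+n} = (\<Sum>j<n. f (i*n + j))" by (simp add: atLeast0LessThan)
  qed
  finally show ?thesis .
qed

lemma flat_index_div_mod:
  fixes i j n :: nat
  shows "j < n \<Longrightarrow> (i*n + j) div n = i" and "j < n \<Longrightarrow> (i*n + j) mod n = j"
  by (simp_all add: add.commute[of "i*n" j])

text \<open>Diagonalise \<open>V\<^sup>* V\<close> by a unitary \<open>C\<close>, where \<open>V\<close> is the \<open>m \<times> n\<close> coefficient matrix of \<open>v\<close>,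
  and put \<open>A = V C\<close>.\<close>
lemma schmidt_decomposition:
  fixes v :: "nat \<Rightarrow> complex"
  obtains A C :: "nat \<Rightarrow> nat \<Rightarrow> complex"
  where "\<And>i j. i < m \<Longrightarrow> j < n \<Longrightarrow> v (i*n + j) = (\<Sum>p<n. A i p * cnj (C j p))"
    and "\<And>p q. p < n \<Longrightarrow> q < n \<Longrightarrow> p \<noteq> q \<Longrightarrow> (\<Sum>i<m. cnj (A i p) * A i q) = 0"
    and "\<And>p q. p < n \<Longrightarrow> q < n \<Longrightarrow> (\<Sum>l<n. cnj (C l p) * C l q) = (if p = q then 1 else 0)"
proof -
  define V where "V = mat m n (\<lambda>(i,j). v (i*n + j))"
  have Vc: "V \<in> carrier_mat m n" by (simp add: V_def)
  have aVc: "adjoint_mat V \<in> carrier_mat n m" using Vc by simp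
  define K where "K = adjoint_mat V * V"
  have Kc: "K \<in> carrier_mat n n" unfolding K_def using mult_carrier_mat[OF aVc Vc] .
  have "adjoint_mat K = K" unfolding K_def by (simp add: adjoint_mat_mult[OF aVc Vc])
  then obtain C where C: "unitary_mat n C"
    and offd: "\<forall>i<n. \<forall>j<n. i \<noteq> j \<longrightarrow> (adjoint_mat C * K * C) $$ (i,j) = 0"
    using hermitian_unitarily_diagonalizable[OF Kc] by blast
  have Cc: "C \<in> carrier_mat n n" and CC: "C * adjoint_mat C = 1\<^sub>m n" "adjoint_mat C * C = 1\<^sub>m n"
    using C unfolding unitary_mat_def by auto
  have aCc: "adjoint_mat C \<in> carrier_mat n n" using Cc by simp
  define A where "A = V * C"
  have Ac: "A \<in> carrier_mat m n" unfolding A_def using Vc Cc by simp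
  have VA: "A * adjoint_mat C = V"
    unfolding A_def using Vc CC by (simp add: assoc_mult_mat[OF Vc Cc aCc])
  have "adjoint_mat A * A = adjoint_mat C * (adjoint_mat V * (V * C))"
    unfolding A_def adjoint_mat_mult[OF Vc Cc] using aCc aVc mult_carrier_mat[OF Vc Cc] by (rule assoc_mult_mat)
  also have "adjoint_mat V * (V * C) = K * C"
    unfolding K_def using aVc Vc Cc by (rule assoc_mult_mat[symmetric])
  finally have AA: "adjoint_mat A * A = adjoint_mat C * K * C"
    using assoc_mult_mat[OF aCc Kc Cc] by simp
  show ?thesis
  proof
    fix i j assume "i < m" "j < n"
    then show "v (i*n + j) = (\<Sum>p<n. A $$ (i,p) * cnj (C $$ (j,p)))"
      using arg_cong[OF VA, of "\<lambda>M. M $$ (i,j)"] Ac Cc by (simp add: V_def scalar_prod_def atLeast0LessThan)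
  next
    fix p q assume "p < n" "q < n" "p \<noteq> q"
    then show "(\<Sum>i<m. cnj (A $$ (i,p)) * A $$ (i,q)) = 0"
      using arg_cong[OF AA, of "\<lambda>M. M $$ (p,q)"] offd Ac by (simp add: scalar_prod_def atLeast0LessThan)
  next
    fix p q assume "p < n" "q < n"
    then show "(\<Sum>l<n. cnj (C $$ (l,p)) * C $$ (l,q)) = (if p = q then 1 else 0)"
      using arg_cong[OF CC(2), of "\<lambda>M. M $$ (p,q)"] Cc by (simp add: scalar_prod_def atLeast0LessThan)
  qed
qed

section \<open>Partial transposes of rank-one projections\<close>

definition pt_row :: "nat \<Rightarrow> nat \<Rightarrow> nat \<Rightarrow> nat" where
  "pt_row n a b = (b div n) * n + a mod n"

definition pt_col :: "nat \<Rightarrow> nat \<Rightarrow> nat \<Rightarrow> nat" where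
  "pt_col n a b = (a div n) * n + b mod n"

lemma partial_transpose_index:
  "a < m*n \<Longrightarrow> b < m*n \<Longrightarrow> partial_transpose m n M $$ (a,b) = M $$ (pt_row n a b, pt_col n a b)"
  by (simp add: partial_transpose_def pt_row_def pt_col_def)

lemma pt_row_less:
  assumes "a < m*n" "b < m*n"
  shows "pt_row n a b < m*n"
proof -
  have "b div n < m" using assms(2) by (simp add: less_mult_imp_div_less)
  then have "(b div n) * n + n \<le> m * n" by (metis add_mult_distrib mult_1 mult_le_mono1 Suc_leI add.commute plus_1_eq_Suc)
  moreover have "a mod n < n" using assms by (cases n) auto
  ultimately show ?thesis unfolding pt_row_def by linarith
qed

lemma pt_col_less: "a < m*n \<Longrightarrow> b < m*n \<Longrightarrow> pt_col n a b < m*n"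
  using pt_row_less[of b m n a] by (simp add: pt_row_def pt_col_def)

lemma pt_row_eq_pt_col_iff:
  assumes "n > 0"
  shows "pt_row n a b = pt_col n a b \<longleftrightarrow> a = b"
proof
  assume h: "pt_row n a b = pt_col n a b"
  then have "pt_row n a b mod n = pt_col n a b mod n" by simp
  then have m: "a mod n = b mod n" unfolding pt_row_def pt_col_def by simp
  then have "(b div n) * n = (a div n) * n" using h unfolding pt_row_def pt_col_def by linarith
  then have "b div n = a div n" using assms by simp
  then show "a = b" using m by (metis div_mult_mod_eq)
qed (simp add: pt_row_def pt_col_def)

text \<open>\<open>pt_form m n v u\<close> is \<open>v\<^sup>* (u u\<^sup>*)\<^sup>\<Gamma> v\<close>.\<close>
definition pt_form :: "nat \<Rightarrow> nat \<Rightarrow> (nat \<Rightarrow> complex) \<Rightarrow> (nat \<Rightarrow> complex) \<Rightarrow> complex" where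
  "pt_form m n v u = (\<Sum>a<m*n. \<Sum>b<m*n. cnj (v a) * u (pt_row n a b) * cnj (u (pt_col n a b)) * v b)"

lemma pt_form_real: "Im (pt_form m n v u) = 0"
proof -
  have "cnj (pt_form m n v u) = (\<Sum>b<m*n. \<Sum>a<m*n. v a * cnj (u (pt_row n a b)) * u (pt_col n a b) * cnj (v b))"
    unfolding pt_form_def cnj_sum by (subst sum.swap) simp
  also have "\<dots> = pt_form m n v u"
    unfolding pt_form_def by (intro sum.cong refl) (simp add: pt_row_def pt_col_def mult_ac)
  finally show ?thesis by (metis Reals_cnj_iff complex_is_Real_iff)
qed

definition tensor_conj :: "nat \<Rightarrow> (nat \<Rightarrow> nat \<Rightarrow> complex) \<Rightarrow> (nat \<Rightarrow> nat \<Rightarrow> complex) \<Rightarrow> nat \<Rightarrow> nat \<Rightarrow> nat \<Rightarrow> complex" where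
  "tensor_conj n A C p q a = cnj (A (a div n) p * C (a mod n) q)"

lemma cinner_tensor_conj:
  "cinner (m*n) (tensor_conj n A C p q) u = (\<Sum>i<m. \<Sum>l<n. A i p * C l q * u (i*n + l))"
  unfolding cinner_def tensor_conj_def sum_flat_index by (simp add: flat_index_div_mod)

text \<open>In a Schmidt basis the form only couples the coefficient of \<open>A\<^sub>p \<otimes> C\<^sub>q\<close> with that
  of \<open>A\<^sub>q \<otimes> C\<^sub>p\<close>: this is the partial transpose acting as a swap.\<close>
lemma pt_form_schmidt:
  assumes v: "\<And>i j. i < m \<Longrightarrow> j < n \<Longrightarrow> v (i*n + j) = (\<Sum>p<n. A i p * cnj (C j p))"
  shows "pt_form m n v u = (\<Sum>p<n. \<Sum>q<n.
    cnj (cinner (m*n) (tensor_conj n A C p q) u) * cinner (m*n) (tensor_conj n A C q p) u)"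
proof -
  define Y where "Y k p = (\<Sum>l<n. u (k*n + l) * C l p)" for k p
  define B where "B i k = (\<Sum>j<n. cnj (v (i*n + j)) * u (k*n + j))" for i k
  have om: "cinner (m*n) (tensor_conj n A C p q) u = (\<Sum>i<m. A i p * Y i q)" for p q
    unfolding cinner_tensor_conj Y_def by (simp add: sum_distrib_left mult_ac)
  have B: "B i k = (\<Sum>p<n. cnj (A i p) * Y k p)" if "i < m" for i k
  proof -
    have "B i k = (\<Sum>j<n. \<Sum>p<n. cnj (A i p) * C j p * u (k*n + j))"
      unfolding B_def using that by (intro sum.cong refl) (simp add: v cnj_sum sum_distrib_right)
    also have "\<dots> = (\<Sum>p<n. \<Sum>j<n. cnj (A i p) * C j p * u (k*n + j))" by (rule sum.swap)
    finally show ?thesis unfolding Y_def by (simp add: sum_distrib_left mult_ac)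
  qed
  have "pt_form m n v u = (\<Sum>i<m. \<Sum>j<n. \<Sum>k<m. \<Sum>l<n.
      cnj (v (i*n + j)) * u (k*n + j) * cnj (u (i*n + l)) * v (k*n + l))"
    unfolding pt_form_def sum_flat_index[of _ m n] by (simp add: pt_row_def pt_col_def flat_index_div_mod)
  also have "\<dots> = (\<Sum>i<m. \<Sum>k<m. \<Sum>j<n. \<Sum>l<n.
      cnj (v (i*n + j)) * u (k*n + j) * cnj (u (i*n + l)) * v (k*n + l))"
    by (intro sum.cong refl sum.swap)
  also have "\<dots> = (\<Sum>i<m. \<Sum>k<m. B i k * cnj (B k i))"
    unfolding B_def by (intro sum.cong refl) (simp add: cnj_sum sum_product mult_ac)
  also have "\<dots> = (\<Sum>i<m. \<Sum>k<m. \<Sum>p<n. \<Sum>q<n. cnj (A i p) * Y k p * (A k q * cnj (Y i q)))"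
    by (intro sum.cong refl) (simp add: B cnj_sum sum_product)
  also have "\<dots> = (\<Sum>i<m. \<Sum>p<n. \<Sum>k<m. \<Sum>q<n. cnj (A i p) * Y k p * (A k q * cnj (Y i q)))"
    by (intro sum.cong refl sum.swap)
  also have "\<dots> = (\<Sum>p<n. \<Sum>i<m. \<Sum>q<n. \<Sum>k<m. cnj (A i p) * Y k p * (A k q * cnj (Y i q)))"
    by (subst sum.swap) (intro sum.cong refl sum.swap)
  also have "\<dots> = (\<Sum>p<n. \<Sum>q<n. \<Sum>i<m. \<Sum>k<m. cnj (A i p) * Y k p * (A k q * cnj (Y i q)))"
    by (intro sum.cong refl sum.swap)
  also have "\<dots> = (\<Sum>p<n. \<Sum>q<n. cnj (\<Sum>i<m. A i p * Y i q) * (\<Sum>k<m. A k q * Y k p))"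
    unfolding cnj_sum sum_product by (simp add: mult_ac)
  finally show ?thesis unfolding om .
qed

section \<open>Bessel bounds for the coefficients swapped by the partial transpose\<close>

lemma cmod_add_cnj_sq:
  "(cmod (\<alpha> * cnj x + \<beta> * cnj y))\<^sup>2 =
     (cmod \<alpha>)\<^sup>2 * (cmod x)\<^sup>2 + (cmod \<beta>)\<^sup>2 * (cmod y)\<^sup>2 + 2 * Re (\<alpha> * cnj \<beta> * (cnj x * y))"
  by (simp only: cmod_power2) (simp add: power2_eq_square algebra_simps)

text \<open>The hypothesis is Bessel's inequality for \<open>\<alpha> x + \<beta> y\<close>; the two bounds on \<open>|M|\<close> take
  \<open>(\<alpha>, \<beta>) = (\<surd>Y, \<plusminus>\<surd>X \<phi>)\<close> with \<open>\<phi>\<close> the phase of \<open>M\<close>.\<close>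
lemma pair_cross_bound:
  fixes a b :: "nat \<Rightarrow> complex" and X Y :: real
  assumes X: "0 \<le> X" and Y: "0 \<le> Y"
    and H: "\<And>\<alpha> \<beta>. (\<Sum>t<r. (cmod (\<alpha> * cnj (a t) + \<beta> * cnj (b t)))\<^sup>2) \<le> (cmod \<alpha>)\<^sup>2 * X + (cmod \<beta>)\<^sup>2 * Y"
  defines "dx \<equiv> \<Sum>t<r. (cmod (a t))\<^sup>2" and "dy \<equiv> \<Sum>t<r. (cmod (b t))\<^sup>2"
    and "M \<equiv> \<Sum>t<r. cnj (a t) * b t"
  shows "2 * sqrt X * sqrt Y * cmod M \<le> Y * dx + X * dy"
    and "Y * dx + X * dy + 2 * sqrt X * sqrt Y * cmod M \<le> 2 * X * Y"
    and "X = 0 \<or> Y = 0 \<Longrightarrow> M = 0"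
proof -
  have exp: "(\<Sum>t<r. (cmod (\<alpha> * cnj (a t) + \<beta> * cnj (b t)))\<^sup>2) =
      (cmod \<alpha>)\<^sup>2 * dx + (cmod \<beta>)\<^sup>2 * dy + 2 * Re (\<alpha> * cnj \<beta> * M)" for \<alpha> \<beta>
    unfolding cmod_add_cnj_sq dx_def dy_def M_def by (simp add: sum.distrib sum_distrib_left Re_sum)
  define \<phi> where "\<phi> = (if M = 0 then 1 else M / complex_of_real (cmod M))"
  have phi1: "cmod \<phi> = 1" by (simp add: \<phi>_def norm_divide)
  have phiM: "cnj \<phi> * M = complex_of_real (cmod M)"
  proof (cases "M = 0")
    case False
    have "cnj M * M = complex_of_real (cmod M) * complex_of_real (cmod M)"
      by (simp add: mult.commute mult_cnj_eq_cmod_sq power2_eq_square)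
    then show ?thesis using False by (simp add: \<phi>_def field_simps)
  qed (simp add: \<phi>_def)
  define \<alpha> where "\<alpha> = complex_of_real (sqrt Y)"
  define \<beta> where "\<beta> = complex_of_real (sqrt X) * \<phi>"
  have n\<alpha>: "(cmod \<alpha>)\<^sup>2 = Y" using Y by (simp add: \<alpha>_def)
  have n\<beta>: "(cmod \<beta>)\<^sup>2 = X" "(cmod (- \<beta>))\<^sup>2 = X" using X by (simp_all add: \<beta>_def norm_mult phi1)
  have "\<alpha> * cnj \<beta> * M = complex_of_real (sqrt X * sqrt Y) * (cnj \<phi> * M)"
    by (simp add: \<alpha>_def \<beta>_def mult_ac)
  then have cross: "Re (\<alpha> * cnj \<beta> * M) = sqrt X * sqrt Y * cmod M"
    "Re (\<alpha> * cnj (- \<beta>) * M) = - (sqrt X * sqrt Y * cmod M)"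
    unfolding phiM by simp_all
  have "Y * dx + X * dy + 2 * (sqrt X * sqrt Y * cmod M) \<le> Y * X + X * Y"
    using H[of \<alpha> \<beta>] unfolding exp n\<alpha> n\<beta> cross .
  then show "Y * dx + X * dy + 2 * sqrt X * sqrt Y * cmod M \<le> 2 * X * Y"
    by (simp add: mult_ac)
  have "0 \<le> (\<Sum>t<r. (cmod (\<alpha> * cnj (a t) + (- \<beta>) * cnj (b t)))\<^sup>2)"
    by (simp add: sum_nonneg)
  then show "2 * sqrt X * sqrt Y * cmod M \<le> Y * dx + X * dy"
    unfolding exp n\<alpha> n\<beta> cross by simp
  have "dx \<le> X" "dy \<le> Y" "0 \<le> dx" "0 \<le> dy"
    using H[of 1 0] exp[of 1 0] H[of 0 1] exp[of 0 1] by (simp_all add: dx_def dy_def sum_nonneg)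
  moreover assume "X = 0 \<or> Y = 0"
  ultimately have "dx = 0 \<or> dy = 0" by linarith
  then have "(\<forall>t<r. a t = 0) \<or> (\<forall>t<r. b t = 0)"
    by (auto simp: dx_def dy_def sum_nonneg_eq_0_iff)
  then show "M = 0" by (auto simp: M_def)
qed

lemma cross_bound_normalized:
  fixes X Y dx dy c :: real
  assumes X: "0 \<le> X" and Y: "0 \<le> Y"
    and lo: "2 * sqrt X * sqrt Y * c \<le> Y * dx + X * dy"
    and hi: "Y * dx + X * dy + 2 * sqrt X * sqrt Y * c \<le> 2 * X * Y"
    and zero: "X = 0 \<or> Y = 0 \<Longrightarrow> c = 0"
  shows "2 * c \<le> sqrt X * sqrt Y * min (dx / X + dy / Y) (2 - (dx / X + dy / Y))"
proof (cases "X = 0 \<or> Y = 0")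
  case False
  define P where "P = sqrt X * sqrt Y"
  define s where "s = dx / X + dy / Y"
  have P: "P > 0" using False X Y by (simp add: P_def)
  have PP: "P * P = X * Y" using X Y by (simp add: P_def mult_ac)
  have Pc: "P * (2 * c) = 2 * sqrt X * sqrt Y * c" by (simp add: P_def mult_ac)
  have "P * (P * s) = Y * dx + X * dy"
    unfolding mult.assoc[symmetric] PP using False by (simp add: s_def field_simps)
  moreover have "P * (P * (2 - s)) = 2 * (P * P) - P * (P * s)" by (simp add: algebra_simps)
  ultimately have "P * (2 * c) \<le> P * (P * s)" "P * (2 * c) \<le> P * (P * (2 - s))"
    using lo hi Pc PP by linarith+
  then have "2 * c \<le> P * s" "2 * c \<le> P * (2 - s)"
    using P by (simp_all add: mult_le_cancel_left_pos)
  then show ?thesis unfolding s_def[symmetric] P_def[symmetric] by (simp add: min_def)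
qed (use zero in auto)

text \<open>For orthonormal \<open>u\<^sub>0, \<dots>, u\<^sub>r\<^sub>-\<^sub>1\<close> and \<open>X = |x|\<^sup>2\<close> this is the share of \<open>|x|\<^sup>2\<close> lying in their span
  (and 0 when \<open>X = 0\<close>).\<close>
definition seen_fraction :: "nat \<Rightarrow> (nat \<Rightarrow> nat \<Rightarrow> complex) \<Rightarrow> nat \<Rightarrow> (nat \<Rightarrow> complex) \<Rightarrow> real \<Rightarrow> real" where
  "seen_fraction N u r x X = (\<Sum>t<r. (cmod (cinner N x (u t)))\<^sup>2) / X"

lemma seen_fraction_bounds:
  fixes u :: "nat \<Rightarrow> nat \<Rightarrow> complex"
  assumes orth: "\<And>s t. s < r \<Longrightarrow> t < r \<Longrightarrow> cinner N (u s) (u t) = (if s = t then 1 else 0)"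
    and x: "cinner N x x = complex_of_real X"
  shows "0 \<le> seen_fraction N u r x X" and "seen_fraction N u r x X \<le> 1"
  using bessel_single[OF orth x] cinner_self_real_nonneg[OF x]
  by (auto simp: seen_fraction_def divide_le_eq_1 sum_nonneg intro!: divide_nonneg_nonneg)

lemma orthogonal_pair_cross_bound:
  fixes x y :: "nat \<Rightarrow> complex" and u :: "nat \<Rightarrow> nat \<Rightarrow> complex"
  assumes orth: "\<And>s t. s < r \<Longrightarrow> t < r \<Longrightarrow> cinner N (u s) (u t) = (if s = t then 1 else 0)"
    and xx: "cinner N x x = complex_of_real X" and yy: "cinner N y y = complex_of_real Y"
    and xy: "cinner N x y = 0"
  defines "f \<equiv> seen_fraction N u r x X + seen_fraction N u r y Y"
  shows "2 * cmod (\<Sum>t<r. cnj (cinner N x (u t)) * cinner N y (u t)) \<le> sqrt X * sqrt Y * min f (2 - f)"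
proof -
  have X: "0 \<le> X" and Y: "0 \<le> Y" using xx yy by (simp_all add: cinner_self_real_nonneg)
  have "(\<Sum>t<r. (cmod (\<alpha> * cnj (cinner N x (u t)) + \<beta> * cnj (cinner N y (u t))))\<^sup>2)
      \<le> (cmod \<alpha>)\<^sup>2 * X + (cmod \<beta>)\<^sup>2 * Y" for \<alpha> \<beta>
  proof -
    define z where "z a = \<alpha> * x a + \<beta> * y a" for a
    have "cinner N y x = 0" using xy cnj_cinner[of N x y] by simp
    then have zz: "cinner N z z = complex_of_real ((cmod \<alpha>)\<^sup>2 * X + (cmod \<beta>)\<^sup>2 * Y)"
      unfolding z_def cinner_add_self using xx yy xy
      by (simp add: mult.commute[of "cnj _"] mult_cnj_eq_cmod_sq)
    have cm: "cmod (cinner N z (u t)) = cmod (\<alpha> * cnj (cinner N x (u t)) + \<beta> * cnj (cinner N y (u t)))"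
      for t
    proof -
      have "cinner N z (u t) = cnj (\<alpha> * cnj (cinner N x (u t)) + \<beta> * cnj (cinner N y (u t)))"
        unfolding z_def cinner_add_left by simp
      then show ?thesis by (simp only: complex_mod_cnj)
    qed
    show ?thesis using bessel_single[OF orth zz] unfolding cm .
  qed
  note raw = pair_cross_bound[OF X Y this]
  show ?thesis unfolding f_def seen_fraction_def
    by (rule cross_bound_normalized[OF X Y raw(1,2)]) (use raw(3) in simp)
qed

lemma orthogonal_family_bessel_sum:
  fixes x :: "'i \<Rightarrow> nat \<Rightarrow> complex" and X :: "'i \<Rightarrow> real" and u :: "nat \<Rightarrow> nat \<Rightarrow> complex"
  assumes fin: "finite I"
    and xx: "\<And>i j. i \<in> I \<Longrightarrow> j \<in> I \<Longrightarrow>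
      cinner N (x i) (x j) = (if i = j then complex_of_real (X i) else 0)"
    and orth: "\<And>s t. s < r \<Longrightarrow> t < r \<Longrightarrow> cinner N (u s) (u t) = (if s = t then 1 else 0)"
  shows "(\<Sum>i\<in>I. seen_fraction N u r (x i) (X i)) \<le> real r"
proof -
  define J where "J = {i \<in> I. X i \<noteq> 0}"
  have finJ: "finite J" using fin by (simp add: J_def)
  have X: "0 < X i" if "i \<in> J" for i
  proof -
    have "cinner N (x i) (x i) = complex_of_real (X i)" using that xx[of i i] by (simp add: J_def)
    then show ?thesis using that cinner_self_real_nonneg by (force simp: J_def)
  qed
  define c where "c i = complex_of_real (1 / sqrt (X i))" for i
  have cc: "cnj (c i) * c i = complex_of_real (1 / X i)" if "i \<in> J" for i
    using X[OF that] by (simp add: c_def real_sqrt_mult[symmetric] flip: of_real_mult)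
  define e where "e i = (\<lambda>a. c i * x i a)" for i
  have e_orth: "cinner N (e i) (e j) = (if i = j then 1 else 0)" if "i \<in> J" "j \<in> J" for i j
  proof -
    have "cinner N (e i) (e j) = cnj (c i) * c j * cinner N (x i) (x j)"
      by (simp add: e_def cinner_scale_left cinner_scale_right)
    then show ?thesis
      using xx[of i j] cc[OF that(1)] X[OF that(1)] that by (auto simp: J_def simp flip: of_real_mult)
  qed
  have each: "(\<Sum>i\<in>J. (cmod (cinner N (x i) (u t)))\<^sup>2 / X i) \<le> 1" if t: "t < r" for t
  proof -
    have "(\<Sum>i\<in>J. (cmod (cinner N (e i) (u t)))\<^sup>2) \<le> Re (cinner N (u t) (u t))"
      by (rule bessel_inequality[OF finJ e_orth])
    moreover have "(cmod (cinner N (e i) (u t)))\<^sup>2 = (cmod (cinner N (x i) (u t)))\<^sup>2 / X i"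
      if "i \<in> J" for i
    proof -
      have "cinner N (e i) (u t) = cnj (c i) * cinner N (x i) (u t)"
        unfolding e_def by (rule cinner_scale_left)
      then have "(cmod (cinner N (e i) (u t)))\<^sup>2 = (cmod (c i))\<^sup>2 * (cmod (cinner N (x i) (u t)))\<^sup>2"
        by (simp only: norm_mult power_mult_distrib complex_mod_cnj)
      moreover have "(cmod (c i))\<^sup>2 = 1 / X i" using X[OF that] by (simp add: c_def norm_divide power_divide)
      ultimately show ?thesis by simp
    qed
    ultimately show ?thesis using orth[OF t t] by simp
  qed
  have "(\<Sum>i\<in>I. seen_fraction N u r (x i) (X i)) = (\<Sum>i\<in>J. seen_fraction N u r (x i) (X i))"
    using fin by (intro sum.mono_neutral_right) (auto simp: J_def seen_fraction_def)
  also have "\<dots> = (\<Sum>i\<in>J. \<Sum>t<r. (cmod (cinner N (x i) (u t)))\<^sup>2 / X i)"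
    by (simp add: seen_fraction_def sum_divide_distrib)
  also have "\<dots> = (\<Sum>t<r. \<Sum>i\<in>J. (cmod (cinner N (x i) (u t)))\<^sup>2 / X i)"
    by (rule sum.swap)
  also have "\<dots> \<le> (\<Sum>t<r. 1)" by (intro sum_mono each) simp
  finally show ?thesis by simp
qed

text \<open>Bessel's inequality bounds each cross term by the seen fractions of the pair
  \<open>x p q, x q p\<close>, and bounds the total of all seen fractions by \<open>r\<close>.\<close>
lemma orthogonal_family_pt_bound:
  fixes x :: "nat \<Rightarrow> nat \<Rightarrow> nat \<Rightarrow> complex" and X :: "nat \<Rightarrow> real"
    and u :: "nat \<Rightarrow> nat \<Rightarrow> complex"
  assumes xx: "\<And>p q p' q'. p < n \<Longrightarrow> q < n \<Longrightarrow> p' < n \<Longrightarrow> q' < n \<Longrightarrow>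
      cinner N (x p q) (x p' q') = (if p = p' \<and> q = q' then complex_of_real (X p) else 0)"
    and orth: "\<And>s t. s < r \<Longrightarrow> t < r \<Longrightarrow> cinner N (u s) (u t) = (if s = t then 1 else 0)"
  obtains T :: "nat \<Rightarrow> nat \<Rightarrow> real"
  where "\<And>p q. p < n \<Longrightarrow> q < n \<Longrightarrow> T p q = T q p \<and> 0 \<le> T p q \<and> T p q \<le> 1"
    and "\<And>p. T p p = 0"
    and "(\<Sum>p<n. \<Sum>q<n. T p q) \<le> 2 * real r"
    and "- Re (\<Sum>p<n. \<Sum>q<n. \<Sum>t<r. cnj (cinner N (x p q) (u t)) * cinner N (x q p) (u t))
      \<le> (\<Sum>p<n. \<Sum>q<n. T p q * sqrt (X p) * sqrt (X q)) / 2"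
proof -
  define e where "e p q = seen_fraction N u r (x p q) (X p)" for p q
  define T where "T p q = (if p = q then 0 else min (e p q + e q p) (2 - (e p q + e q p)))" for p q
  have xx_self: "cinner N (x p q) (x p q) = complex_of_real (X p)" if "p < n" "q < n" for p q
    using xx[OF that that] by simp
  have e01: "0 \<le> e p q \<and> e p q \<le> 1" if "p < n" "q < n" for p q
    using seen_fraction_bounds[OF orth xx_self[OF that]] by (simp add: e_def)
  have T: "T p q = T q p \<and> 0 \<le> T p q \<and> T p q \<le> 1" if "p < n" "q < n" for p q
    using e01[OF that] e01[OF that(2,1)] by (auto simp: T_def)
  have "(\<Sum>pq\<in>{..<n} \<times> {..<n}. seen_fraction N u r (x (fst pq) (snd pq)) (X (fst pq))) \<le> real r"
  proof (rule orthogonal_family_bessel_sum[OF _ _ orth])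
    fix i j assume "i \<in> {..<n} \<times> {..<n}" "j \<in> {..<n} \<times> {..<n}"
    then show "cinner N (x (fst i) (snd i)) (x (fst j) (snd j)) =
        (if i = j then complex_of_real (X (fst i)) else 0)"
      using xx[of "fst i" "snd i" "fst j" "snd j"] by (auto simp: prod_eq_iff)
  qed simp
  then have sum_e: "(\<Sum>p<n. \<Sum>q<n. e p q) \<le> real r"
    by (simp add: e_def sum.cartesian_product case_prod_beta)
  have "(\<Sum>p<n. \<Sum>q<n. T p q) \<le> (\<Sum>p<n. \<Sum>q<n. e p q + e q p)"
    using e01 by (intro sum_mono) (auto simp: T_def)
  also have "\<dots> = (\<Sum>p<n. \<Sum>q<n. e p q) + (\<Sum>q<n. \<Sum>p<n. e p q)"
    by (simp add: sum.distrib)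
  also have "(\<Sum>q<n. \<Sum>p<n. e p q) = (\<Sum>p<n. \<Sum>q<n. e p q)"
    by (rule sum.swap)
  finally have sum_T: "(\<Sum>p<n. \<Sum>q<n. T p q) \<le> 2 * real r"
    using sum_e by simp
  have pair: "- Re (\<Sum>t<r. cnj (cinner N (x p q) (u t)) * cinner N (x q p) (u t))
      \<le> T p q * sqrt (X p) * sqrt (X q) / 2" if pq: "p < n" "q < n" for p q
  proof (cases "p = q")
    case True
    have "Re (\<Sum>t<r. cnj (cinner N (x p p) (u t)) * cinner N (x p p) (u t)) \<ge> 0"
      by (simp add: Re_sum cnj_mult_self sum_nonneg)
    then show ?thesis using True by (simp add: T_def)
  next
    case False
    define S where "S = (\<Sum>t<r. cnj (cinner N (x p q) (u t)) * cinner N (x q p) (u t))"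
    have "cinner N (x p q) (x q p) = 0" using xx[OF pq pq(2,1)] False by simp
    from orthogonal_pair_cross_bound[OF orth xx_self[OF pq] xx_self[OF pq(2,1)] this]
    have "2 * cmod S \<le> sqrt (X p) * sqrt (X q) * T p q"
      using False unfolding S_def T_def e_def by simp
    moreover have "- Re S \<le> cmod S" using abs_Re_le_cmod[of S] by linarith
    moreover have "sqrt (X p) * sqrt (X q) * T p q = T p q * sqrt (X p) * sqrt (X q)" by simp
    ultimately show ?thesis unfolding S_def[symmetric] by linarith
  qed
  have "- Re (\<Sum>p<n. \<Sum>q<n. \<Sum>t<r. cnj (cinner N (x p q) (u t)) * cinner N (x q p) (u t))
      = (\<Sum>p<n. \<Sum>q<n. - Re (\<Sum>t<r. cnj (cinner N (x p q) (u t)) * cinner N (x q p) (u t)))"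
    by (simp only: Re_sum sum_negf)
  also have "\<dots> \<le> (\<Sum>p<n. \<Sum>q<n. T p q * sqrt (X p) * sqrt (X q) / 2)"
    by (intro sum_mono pair) auto
  finally have "- Re (\<Sum>p<n. \<Sum>q<n. \<Sum>t<r. cnj (cinner N (x p q) (u t)) * cinner N (x q p) (u t))
      \<le> (\<Sum>p<n. \<Sum>q<n. T p q * sqrt (X p) * sqrt (X q)) / 2"
    by (simp add: sum_divide_distrib)
  moreover have "T p p = 0" for p by (simp add: T_def)
  ultimately show ?thesis using that T sum_T by blast
qed

lemma cinner_tensor_conj_orthogonal:
  assumes A: "\<And>p q. p < n \<Longrightarrow> q < n \<Longrightarrow> p \<noteq> q \<Longrightarrow> (\<Sum>i<m. cnj (A i p) * A i q) = 0"
    and C: "\<And>p q. p < n \<Longrightarrow> q < n \<Longrightarrow> (\<Sum>l<n. cnj (C l p) * C l q) = (if p = q then 1 else 0)"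
    and pq: "p < n" "q < n" "p' < n" "q' < n"
  shows "cinner (m*n) (tensor_conj n A C p q) (tensor_conj n A C p' q') =
    (if p = p' \<and> q = q' then complex_of_real (\<Sum>i<m. (cmod (A i p))\<^sup>2) else 0)"
proof -
  have "cinner (m*n) (tensor_conj n A C p q) (tensor_conj n A C p' q') =
      (\<Sum>i<m. A i p * cnj (A i p')) * (\<Sum>l<n. C l q * cnj (C l q'))"
    unfolding cinner_def tensor_conj_def sum_flat_index sum_product
    by (simp add: flat_index_div_mod mult_ac)
  also have "(\<Sum>l<n. C l q * cnj (C l q')) = (if q = q' then 1 else 0)"
    using arg_cong[OF C[OF pq(2,4)], of cnj] by (simp add: cnj_sum mult.commute)
  also have "(\<Sum>i<m. A i p * cnj (A i p')) = (if p = p' then complex_of_real (\<Sum>i<m. (cmod (A i p))\<^sup>2) else 0)"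
    using arg_cong[OF A[OF pq(1,3)], of cnj]
    by (auto simp: cnj_sum mult.commute mult_cnj_eq_cmod_sq of_real_sum)
  finally show ?thesis by simp
qed

lemma cinner_schmidt:
  assumes v: "\<And>i j. i < m \<Longrightarrow> j < n \<Longrightarrow> v (i*n + j) = (\<Sum>p<n. A i p * cnj (C j p))"
    and C: "\<And>p q. p < n \<Longrightarrow> q < n \<Longrightarrow> (\<Sum>l<n. cnj (C l p) * C l q) = (if p = q then 1 else 0)"
  shows "cinner (m*n) v v = complex_of_real (\<Sum>p<n. \<Sum>i<m. (cmod (A i p))\<^sup>2)"
proof -
  have C': "(\<Sum>j<n. C j q * cnj (C j p)) = (if p = q then 1 else 0)" if "p < n" "q < n" for p q
    using arg_cong[OF C[OF that(2,1)], of cnj] by (auto simp: cnj_sum mult.commute)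
  have "cinner (m*n) v v = (\<Sum>i<m. \<Sum>j<n. \<Sum>p<n. \<Sum>q<n. cnj (A i q) * A i p * (C j q * cnj (C j p)))"
    unfolding cinner_def sum_flat_index by (simp add: v cnj_sum sum_product mult_ac)
  also have "\<dots> = (\<Sum>i<m. \<Sum>p<n. \<Sum>q<n. \<Sum>j<n. cnj (A i q) * A i p * (C j q * cnj (C j p)))"
    by (rule sum.cong[OF refl], subst sum.swap, rule sum.cong[OF refl], rule sum.swap)
  also have "\<dots> = (\<Sum>i<m. \<Sum>p<n. \<Sum>q<n. if q = p then cnj (A i q) * A i p else 0)"
    by (intro sum.cong refl) (simp add: sum_distrib_left[symmetric] C')
  also have "\<dots> = (\<Sum>p<n. \<Sum>i<m. cnj (A i p) * A i p)"
    by (subst sum.swap) simp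
  finally show ?thesis by (simp add: mult.commute[of "cnj _"] mult_cnj_eq_cmod_sq of_real_sum)
qed

lemma pt_forms_schmidt_bound:
  fixes v :: "nat \<Rightarrow> complex" and u :: "nat \<Rightarrow> nat \<Rightarrow> complex"
  assumes orth: "\<And>s t. s < r \<Longrightarrow> t < r \<Longrightarrow> cinner (m*n) (u s) (u t) = (if s = t then 1 else 0)"
  obtains \<sigma> :: "nat \<Rightarrow> real" and T :: "nat \<Rightarrow> nat \<Rightarrow> real"
  where "\<And>p. 0 \<le> \<sigma> p"
    and "\<And>p q. p < n \<Longrightarrow> q < n \<Longrightarrow> T p q = T q p \<and> 0 \<le> T p q \<and> T p q \<le> 1"
    and "\<And>p. T p p = 0"
    and "(\<Sum>p<n. \<Sum>q<n. T p q) \<le> 2 * real r"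
    and "(\<Sum>p<n. (\<sigma> p)\<^sup>2) = Re (cinner (m*n) v v)"
    and "- Re (\<Sum>t<r. pt_form m n v (u t)) \<le> (\<Sum>p<n. \<Sum>q<n. T p q * \<sigma> p * \<sigma> q) / 2"
proof -
  obtain A C where v: "\<And>i j. i < m \<Longrightarrow> j < n \<Longrightarrow> v (i*n + j) = (\<Sum>p<n. A i p * cnj (C j p))"
    and A: "\<And>p q. p < n \<Longrightarrow> q < n \<Longrightarrow> p \<noteq> q \<Longrightarrow> (\<Sum>i<m. cnj (A i p) * A i q) = 0"
    and C: "\<And>p q. p < n \<Longrightarrow> q < n \<Longrightarrow> (\<Sum>l<n. cnj (C l p) * C l q) = (if p = q then 1 else 0)"
    by (rule schmidt_decomposition[where v = v and m = m and n = n]) (rule that)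
  define X where "X p = (\<Sum>i<m. (cmod (A i p))\<^sup>2)" for p
  have X: "0 \<le> X p" for p by (simp add: X_def sum_nonneg)
  have xx: "cinner (m*n) (tensor_conj n A C p q) (tensor_conj n A C p' q') =
      (if p = p' \<and> q = q' then complex_of_real (X p) else 0)"
    if "p < n" "q < n" "p' < n" "q' < n" for p q p' q'
    using cinner_tensor_conj_orthogonal[OF A C that] by (simp add: X_def)
  obtain T :: "nat \<Rightarrow> nat \<Rightarrow> real"
  where T: "\<And>p q. p < n \<Longrightarrow> q < n \<Longrightarrow> T p q = T q p \<and> 0 \<le> T p q \<and> T p q \<le> 1"
    "\<And>p. T p p = 0" "(\<Sum>p<n. \<Sum>q<n. T p q) \<le> 2 * real r"
    and bound: "- Re (\<Sum>p<n. \<Sum>q<n. \<Sum>t<r. cnj (cinner (m*n) (tensor_conj n A C p q) (u t))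
        * cinner (m*n) (tensor_conj n A C q p) (u t))
      \<le> (\<Sum>p<n. \<Sum>q<n. T p q * sqrt (X p) * sqrt (X q)) / 2"
    by (rule orthogonal_family_pt_bound[where n = n and r = r and N = "m*n" and x = "tensor_conj n A C" and X = X and u = u]) (assumption | rule xx orth that)+
  have "(\<Sum>t<r. pt_form m n v (u t)) = (\<Sum>t<r. \<Sum>p<n. \<Sum>q<n.
      cnj (cinner (m*n) (tensor_conj n A C p q) (u t)) * cinner (m*n) (tensor_conj n A C q p) (u t))"
    by (simp add: pt_form_schmidt[where m = m and n = n and A = A and C = C, OF v])
  also have "\<dots> = (\<Sum>p<n. \<Sum>q<n. \<Sum>t<r.
      cnj (cinner (m*n) (tensor_conj n A C p q) (u t)) * cinner (m*n) (tensor_conj n A C q p) (u t))"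
    by (subst sum.swap, rule sum.cong[OF refl], rule sum.swap)
  moreover have "(\<Sum>p<n. (sqrt (X p))\<^sup>2) = Re (cinner (m*n) v v)"
    using X by (simp add: cinner_schmidt[where m = m and n = n and A = A and C = C, OF v C] X_def)
  ultimately show ?thesis
    by (intro that[of "\<lambda>p. sqrt (X p)" T] T) (use bound X in simp_all)
qed

section \<open>Quadratic forms with bounded symmetric weights\<close>

lemma two_mult_le_weighted_squares:
  fixes x y a :: real
  assumes "0 < a"
  shows "2 * x * y \<le> a * x\<^sup>2 + y\<^sup>2 / a"
proof -
  have "0 \<le> (a*x - y)\<^sup>2 / a" using assms by simp
  also have "(a*x - y)\<^sup>2 / a = a * x\<^sup>2 + y\<^sup>2 / a - 2 * x * y"
    using assms by (simp add: field_simps power2_eq_square)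
  finally show ?thesis by simp
qed

lemma sqrt2_mult_add_mult_le_sum_squares:
  fixes x y z :: real
  shows "sqrt 2 * (x * y + x * z) \<le> x\<^sup>2 + y\<^sup>2 + z\<^sup>2"
proof -
  define s where "s = sqrt (2::real)"
  define Y where "Y = s * (y + z) / 2"
  have s2: "s\<^sup>2 = 2" by (simp add: s_def)
  have a: "2 * x * Y \<le> 1 * x\<^sup>2 + Y\<^sup>2 / 1" by (rule two_mult_le_weighted_squares) simp
  have b: "Y\<^sup>2 = s\<^sup>2 * (y+z)\<^sup>2 / 4" by (simp add: Y_def power_mult_distrib power_divide)
  have c: "(y+z)\<^sup>2 \<le> 2 * (y\<^sup>2 + z\<^sup>2)" using two_mult_le_weighted_squares[of 1 y z] by (simp add: power2_sum)
  have d: "2 * x * Y = s * (x * y + x * z)" by (simp add: Y_def algebra_simps)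
  show ?thesis using a b c d s2 unfolding s_def[symmetric] by simp
qed

lemma sum_squares_subset_le:
  fixes \<sigma> :: "nat \<Rightarrow> real"
  assumes "A \<subseteq> {..<n}"
  shows "(\<Sum>p\<in>A. (\<sigma> p)\<^sup>2) \<le> (\<Sum>p<n. (\<sigma> p)\<^sup>2)"
  using assms by (intro sum_mono2) auto

lemma sqrt2_adjacent_edges_le_sum_squares:
  fixes \<sigma> :: "nat \<Rightarrow> real"
  assumes "x < n" "y < n" "z < n" "x \<noteq> y" "x \<noteq> z" "y \<noteq> z"
  shows "sqrt 2 * (\<sigma> x * \<sigma> y + \<sigma> x * \<sigma> z) \<le> (\<Sum>p<n. (\<sigma> p)\<^sup>2)"
proof -
  have "(\<Sum>p\<in>{x,y,z}. (\<sigma> p)\<^sup>2) \<le> (\<Sum>p<n. (\<sigma> p)\<^sup>2)" using assms by (intro sum_squares_subset_le) auto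
  moreover have "(\<Sum>p\<in>{x,y,z}. (\<sigma> p)\<^sup>2) = (\<sigma> x)\<^sup>2 + (\<sigma> y)\<^sup>2 + (\<sigma> z)\<^sup>2" using assms by simp
  ultimately show ?thesis using sqrt2_mult_add_mult_le_sum_squares[of "\<sigma> x" "\<sigma> y" "\<sigma> z"] by linarith
qed

lemma sqrt2_disjoint_edges_le_sum_squares:
  fixes \<sigma> :: "nat \<Rightarrow> real"
  assumes "a < n" "b < n" "c < n" "d < n" "distinct [a,b,c,d]"
  shows "sqrt 2 * (\<sigma> a * \<sigma> b + \<sigma> c * \<sigma> d) \<le> (\<Sum>p<n. (\<sigma> p)\<^sup>2)"
proof -
  have "(\<Sum>p\<in>{a,b,c,d}. (\<sigma> p)\<^sup>2) \<le> (\<Sum>p<n. (\<sigma> p)\<^sup>2)" using assms by (intro sum_squares_subset_le) auto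
  moreover have "(\<Sum>p\<in>{a,b,c,d}. (\<sigma> p)\<^sup>2) = (\<sigma> a)\<^sup>2 + (\<sigma> b)\<^sup>2 + (\<sigma> c)\<^sup>2 + (\<sigma> d)\<^sup>2" using assms by simp
  moreover have "2 * (\<sigma> a * \<sigma> b + \<sigma> c * \<sigma> d) \<le> (\<sigma> a)\<^sup>2 + (\<sigma> b)\<^sup>2 + (\<sigma> c)\<^sup>2 + (\<sigma> d)\<^sup>2"
    using two_mult_le_weighted_squares[of 1 "\<sigma> a" "\<sigma> b"] two_mult_le_weighted_squares[of 1 "\<sigma> c" "\<sigma> d"] by simp
  moreover have "sqrt 2 * (\<sigma> a * \<sigma> b + \<sigma> c * \<sigma> d) \<le> 2 * (\<sigma> a * \<sigma> b + \<sigma> c * \<sigma> d)" if "0 \<le> \<sigma> a * \<sigma> b + \<sigma> c * \<sigma> d"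
  proof -
    have "sqrt (2::real) \<le> sqrt 4" by (rule real_sqrt_le_mono) simp
    then have "sqrt (2::real) \<le> 2" by simp
    then show ?thesis using that by (rule mult_right_mono)
  qed
  moreover have "sqrt 2 * (\<sigma> a * \<sigma> b + \<sigma> c * \<sigma> d) \<le> 0" if "\<sigma> a * \<sigma> b + \<sigma> c * \<sigma> d < 0"
    using that by (simp add: mult_nonneg_nonpos)
  moreover have "0 \<le> (\<sigma> a)\<^sup>2 + (\<sigma> b)\<^sup>2 + (\<sigma> c)\<^sup>2 + (\<sigma> d)\<^sup>2" by simp
  ultimately show ?thesis by linarith
qed

lemma sqrt2_two_edges_le_sum_squares:
  fixes \<sigma> :: "nat \<Rightarrow> real"
  assumes "a < n" "b < n" "c < n" "d < n" "a \<noteq> b" "c \<noteq> d" "\<not> (c = a \<and> d = b)" "\<not> (c = b \<and> d = a)"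
  shows "sqrt 2 * (\<sigma> a * \<sigma> b + \<sigma> c * \<sigma> d) \<le> (\<Sum>p<n. (\<sigma> p)\<^sup>2)"
proof -
  have "c = a \<or> c = b \<or> d = a \<or> d = b \<or> distinct [a,b,c,d]" using assms by auto
  then consider "c = a" | "c = b" | "d = a" | "d = b" | "distinct [a,b,c,d]" by blast
  then show ?thesis
  proof cases
    case 1 then show ?thesis using sqrt2_adjacent_edges_le_sum_squares[of a n b d \<sigma>] assms by auto
  next
    case 2 then show ?thesis using sqrt2_adjacent_edges_le_sum_squares[of b n a d \<sigma>] assms by (auto simp: mult.commute)
  next
    case 3 then show ?thesis using sqrt2_adjacent_edges_le_sum_squares[of a n b c \<sigma>] assms by (auto simp: mult.commute)
  next
    case 4 then show ?thesis using sqrt2_adjacent_edges_le_sum_squares[of b n a c \<sigma>] assms by (auto simp: mult.commute)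
  next
    case 5 then show ?thesis using sqrt2_disjoint_edges_le_sum_squares[of a n b c d \<sigma>] assms by auto
  qed
qed

lemma quadratic_form_le_weighted_row_sums:
  fixes \<sigma> :: "nat \<Rightarrow> real" and T \<alpha> :: "nat \<Rightarrow> nat \<Rightarrow> real"
  assumes sym: "\<And>p q. p < n \<Longrightarrow> q < n \<Longrightarrow> T p q = T q p"
    and nn: "\<And>p q. p < n \<Longrightarrow> q < n \<Longrightarrow> 0 \<le> T p q"
    and al: "\<And>p q. p < n \<Longrightarrow> q < n \<Longrightarrow> 0 < \<alpha> p q \<and> \<alpha> q p = 1 / \<alpha> p q"
  shows "(\<Sum>p<n. \<Sum>q<n. T p q * \<sigma> p * \<sigma> q) \<le> (\<Sum>p<n. (\<sigma> p)\<^sup>2 * (\<Sum>q<n. T p q * \<alpha> p q))"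
proof -
  have le: "T p q * \<sigma> p * \<sigma> q \<le> (T p q * \<alpha> p q * (\<sigma> p)\<^sup>2 + T q p * \<alpha> q p * (\<sigma> q)\<^sup>2) / 2"
    if "p < n" "q < n" for p q
  proof -
    have "2 * \<sigma> p * \<sigma> q \<le> \<alpha> p q * (\<sigma> p)\<^sup>2 + (\<sigma> q)\<^sup>2 / \<alpha> p q" using al[OF that] two_mult_le_weighted_squares by blast
    then have "T p q * (2 * \<sigma> p * \<sigma> q) \<le> T p q * (\<alpha> p q * (\<sigma> p)\<^sup>2 + (\<sigma> q)\<^sup>2 / \<alpha> p q)"
      by (rule mult_left_mono[OF _ nn[OF that]])
    then show ?thesis using al[OF that] sym[OF that] by (simp add: field_simps)
  qed
  have "(\<Sum>p<n. \<Sum>q<n. T p q * \<sigma> p * \<sigma> q) \<le> (\<Sum>p<n. \<Sum>q<n. (T p q * \<alpha> p q * (\<sigma> p)\<^sup>2 + T q p * \<alpha> q p * (\<sigma> q)\<^sup>2) / 2)"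
    by (intro sum_mono le) auto
  also have "\<dots> = ((\<Sum>p<n. \<Sum>q<n. T p q * \<alpha> p q * (\<sigma> p)\<^sup>2) + (\<Sum>p<n. \<Sum>q<n. T q p * \<alpha> q p * (\<sigma> q)\<^sup>2)) / 2"
    by (simp only: sum_divide_distrib[symmetric] sum.distrib)
  also have "(\<Sum>p<n. \<Sum>q<n. T q p * \<alpha> q p * (\<sigma> q)\<^sup>2) = (\<Sum>p<n. \<Sum>q<n. T p q * \<alpha> p q * (\<sigma> p)\<^sup>2)"
    by (rule sum.swap)
  also have "((\<Sum>p<n. \<Sum>q<n. T p q * \<alpha> p q * (\<sigma> p)\<^sup>2) + (\<Sum>p<n. \<Sum>q<n. T p q * \<alpha> p q * (\<sigma> p)\<^sup>2)) / 2
     = (\<Sum>p<n. (\<sigma> p)\<^sup>2 * (\<Sum>q<n. T p q * \<alpha> p q))"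
    by (simp add: sum_distrib_left mult.commute mult.left_commute)
  finally show ?thesis .
qed

lemma row_sums_pair_le:
  fixes T :: "nat \<Rightarrow> nat \<Rightarrow> real"
  assumes sym: "\<And>p q. p < n \<Longrightarrow> q < n \<Longrightarrow> T p q = T q p"
    and nn: "\<And>p q. p < n \<Longrightarrow> q < n \<Longrightarrow> 0 \<le> T p q"
    and diag: "\<And>p. p < n \<Longrightarrow> T p p = 0"
    and tot: "(\<Sum>p<n. \<Sum>q<n. T p q) \<le> 6"
    and a: "a < n" and p: "p < n" "p \<noteq> a"
  shows "(\<Sum>q<n. T a q) + (\<Sum>q<n. T p q) - T p a \<le> 3"
proof -
  define D where "D x = (\<Sum>q<n. T x q)" for x
  let ?R = "{..<n} - {a,p}"
  have sub: "{a,p} \<subseteq> {..<n}" using a p by auto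
  have col: "(\<Sum>p'\<in>?R. T p' x) = D x - T a x - T p x" if "x < n" for x
  proof -
    have "(\<Sum>p'<n. T p' x) = (\<Sum>p'\<in>?R. T p' x) + (\<Sum>p'\<in>{a,p}. T p' x)"
      by (rule sum.subset_diff[OF sub]) auto
    moreover have "(\<Sum>p'<n. T p' x) = D x" unfolding D_def using sym that by (intro sum.cong) auto
    ultimately show ?thesis using p by simp
  qed
  have "(\<Sum>p'\<in>?R. T p' a + T p' p) \<le> (\<Sum>p'\<in>?R. D p')"
  proof (intro sum_mono)
    fix p' assume "p' \<in> ?R"
    then have "(\<Sum>q\<in>{a,p}. T p' q) \<le> D p'"
      unfolding D_def using sub nn by (intro sum_mono2) auto
    then show "T p' a + T p' p \<le> D p'" using p by simp
  qed
  also have "(\<Sum>p'\<in>?R. D p') = (\<Sum>p'<n. D p') - D a - D p"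
    using sum.subset_diff[OF sub, of D] p by simp
  finally have "D a - T p a + (D p - T a p) \<le> (\<Sum>p'<n. D p') - D a - D p"
    using col[OF a] col[OF p(1)] diag a p by (simp add: sum.distrib)
  moreover have "(\<Sum>p'<n. D p') \<le> 6" using tot by (simp add: D_def)
  ultimately show ?thesis using sym[OF a p(1)] by (simp add: D_def)
qed

text \<open>If some row sum \<open>D a\<close> exceeds 2, all other rows are light enough (by
  \<open>row_sums_pair_le\<close>) to absorb the weight \<open>D a / 2\<close> that AM-GM shifts from row \<open>a\<close> to them.\<close>
lemma quadratic_form_le_two_sum_squares:
  fixes \<sigma> :: "nat \<Rightarrow> real" and T :: "nat \<Rightarrow> nat \<Rightarrow> real"
  assumes sym: "\<And>p q. p < n \<Longrightarrow> q < n \<Longrightarrow> T p q = T q p"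
    and nn: "\<And>p q. p < n \<Longrightarrow> q < n \<Longrightarrow> 0 \<le> T p q"
    and le1: "\<And>p q. p < n \<Longrightarrow> q < n \<Longrightarrow> T p q \<le> 1"
    and diag: "\<And>p. p < n \<Longrightarrow> T p p = 0"
    and tot: "(\<Sum>p<n. \<Sum>q<n. T p q) \<le> 6"
  shows "(\<Sum>p<n. \<Sum>q<n. T p q * \<sigma> p * \<sigma> q) \<le> 2 * (\<Sum>p<n. (\<sigma> p)\<^sup>2)"
proof -
  define D where "D p = (\<Sum>q<n. T p q)" for p
  obtain \<alpha> :: "nat \<Rightarrow> nat \<Rightarrow> real"
    where \<alpha>: "\<And>p q. p < n \<Longrightarrow> q < n \<Longrightarrow> 0 < \<alpha> p q \<and> \<alpha> q p = 1 / \<alpha> p q"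
      and rows: "\<And>p. p < n \<Longrightarrow> (\<Sum>q<n. T p q * \<alpha> p q) \<le> 2"
  proof (cases "\<forall>p<n. D p \<le> 2")
    case True
    then show ?thesis by (intro that[of "\<lambda>_ _. 1"]) (auto simp: D_def)
  next
    case False
    then obtain a where a: "a < n" "D a > 2" by auto
    define l where "l = D a / 2"
    have l: "l > 1" using a by (simp add: l_def)
    define \<alpha> where "\<alpha> p q = (if p = a \<and> q \<noteq> a then 1 / l else if q = a \<and> p \<noteq> a then l else 1)" for p q
    show ?thesis
    proof (rule that[of \<alpha>])
      fix p assume p: "p < n"
      show "(\<Sum>q<n. T p q * \<alpha> p q) \<le> 2"
      proof (cases "p = a")
        case True
        have "(\<Sum>q<n. T p q * \<alpha> p q) = (\<Sum>q<n. T p q / l)"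
          using True diag a by (intro sum.cong) (auto simp: \<alpha>_def)
        also have "\<dots> = D a / l" using True by (simp add: D_def sum_divide_distrib)
        finally show ?thesis using l by (simp add: l_def)
      next
        case False
        have "(\<Sum>q<n. T p q * \<alpha> p q) = (\<Sum>q<n. T p q + (if q = a then (l - 1) * T p q else 0))"
          using False by (intro sum.cong) (auto simp: \<alpha>_def algebra_simps)
        also have "\<dots> = D p + (D a * T p a / 2 - T p a)"
          using a by (simp add: sum.distrib D_def l_def algebra_simps)
        finally have "(\<Sum>q<n. T p q * \<alpha> p q) = D p + (D a * T p a / 2 - T p a)" .
        moreover have "D a * T p a \<le> D a"
          using le1[OF p a(1)] a by (simp add: mult_left_le)
        moreover have "D a + D p - T p a \<le> 3"
          using row_sums_pair_le[OF sym nn diag tot a(1) p False] by (simp add: D_def)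
        ultimately show ?thesis using a by linarith
      qed
    qed (use l in \<open>auto simp: \<alpha>_def\<close>)
  qed
  have "(\<Sum>p<n. \<Sum>q<n. T p q * \<sigma> p * \<sigma> q) \<le> (\<Sum>p<n. (\<sigma> p)\<^sup>2 * (\<Sum>q<n. T p q * \<alpha> p q))"
    by (rule quadratic_form_le_weighted_row_sums[OF sym nn \<alpha>])
  also have "\<dots> \<le> (\<Sum>p<n. (\<sigma> p)\<^sup>2 * 2)"
    using rows by (intro sum_mono mult_left_mono) auto
  finally show ?thesis by (simp add: sum_distrib_left mult.commute)
qed

lemma finite_ex_arg_max:
  fixes f :: "'a \<Rightarrow> real"
  assumes "finite A" "A \<noteq> {}"
  shows "\<exists>x\<in>A. \<forall>y\<in>A. f y \<le> f x"
proof -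
  have "Max (f ` A) \<in> f ` A" using assms by (intro Max_in) auto
  then obtain x where x: "x \<in> A" "f x = Max (f ` A)" by auto
  have "\<forall>y\<in>A. f y \<le> f x" using Max_ge[of "f ` A"] assms x by auto
  then show ?thesis using x by blast
qed

lemma weighted_sum_le_heaviest:
  fixes t w :: "'a \<Rightarrow> real"
  assumes fin: "finite E" and H: "H \<subseteq> E"
    and t: "\<And>e. e \<in> E \<Longrightarrow> 0 \<le> t e" "\<And>e. e \<in> H \<Longrightarrow> t e \<le> 1"
    and light: "\<And>e. e \<in> E - H \<Longrightarrow> w e \<le> \<theta>" and heavy: "\<And>e. e \<in> H \<Longrightarrow> \<theta> \<le> w e"
  shows "(\<Sum>e\<in>E. t e * w e) \<le> (\<Sum>e\<in>H. w e) + \<theta> * ((\<Sum>e\<in>E. t e) - card H)"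
proof -
  have "(\<Sum>e\<in>E. t e * w e) = (\<Sum>e\<in>E. t e * (w e - \<theta>)) + \<theta> * (\<Sum>e\<in>E. t e)"
    by (simp add: algebra_simps sum.distrib sum_distrib_left sum_subtractf)
  also have "(\<Sum>e\<in>E. t e * (w e - \<theta>)) = (\<Sum>e\<in>E - H. t e * (w e - \<theta>)) + (\<Sum>e\<in>H. t e * (w e - \<theta>))"
    by (rule sum.subset_diff[OF H fin])
  also have "(\<Sum>e\<in>E - H. t e * (w e - \<theta>)) \<le> 0"
    using t light by (intro sum_nonpos mult_nonneg_nonpos) auto
  also have "(\<Sum>e\<in>H. t e * (w e - \<theta>)) \<le> (\<Sum>e\<in>H. w e - \<theta>)"
    using t heavy H by (intro sum_mono) (simp add: mult_left_le_one_le subset_iff)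
  also have "(\<Sum>e\<in>H. w e - \<theta>) = (\<Sum>e\<in>H. w e) - \<theta> * card H"
    by (simp add: sum_subtractf)
  finally show ?thesis by (simp add: algebra_simps)
qed

text \<open>The form is linear in the off-diagonal weights; with total weight 4 it is maximal when both
  orientations of the heaviest edge \<open>{a, b}\<close> get weight 1 and the rest goes to the next heaviest.\<close>
lemma quadratic_form_le_sqrt2_sum_squares:
  fixes \<sigma> :: "nat \<Rightarrow> real" and T :: "nat \<Rightarrow> nat \<Rightarrow> real"
  assumes nn: "\<And>p q. p < n \<Longrightarrow> q < n \<Longrightarrow> 0 \<le> T p q"
    and le1: "\<And>p q. p < n \<Longrightarrow> q < n \<Longrightarrow> T p q \<le> 1"
    and diag: "\<And>p. p < n \<Longrightarrow> T p p = 0"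
    and tot: "(\<Sum>p<n. \<Sum>q<n. T p q) \<le> 4"
    and \<sigma>: "\<And>p. p < n \<Longrightarrow> 0 \<le> \<sigma> p"
  shows "(\<Sum>p<n. \<Sum>q<n. T p q * \<sigma> p * \<sigma> q) \<le> sqrt 2 * (\<Sum>p<n. (\<sigma> p)\<^sup>2)"
proof -
  define E where "E = {(p,q). p < n \<and> q < n \<and> p \<noteq> q}"
  define w where "w e = \<sigma> (fst e) * \<sigma> (snd e)" for e
  define t where "t e = T (fst e) (snd e)" for e
  have fin: "finite E" unfolding E_def by (rule finite_subset[of _ "{..<n} \<times> {..<n}"]) auto
  have off_diag: "(\<Sum>p<n. \<Sum>q<n. g p q) = (\<Sum>e\<in>E. g (fst e) (snd e))"
    if "\<And>p. p < n \<Longrightarrow> g p p = 0" for g :: "nat \<Rightarrow> nat \<Rightarrow> real"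
  proof -
    have "(\<Sum>p<n. \<Sum>q<n. g p q) = (\<Sum>e\<in>{..<n} \<times> {..<n}. g (fst e) (snd e))"
      by (simp add: sum.cartesian_product case_prod_beta)
    also have "\<dots> = (\<Sum>e\<in>E. g (fst e) (snd e))"
      using that by (intro sum.mono_neutral_right) (auto simp: E_def)
    finally show ?thesis .
  qed
  have form: "(\<Sum>p<n. \<Sum>q<n. T p q * \<sigma> p * \<sigma> q) = (\<Sum>e\<in>E. t e * w e)"
    using off_diag[of "\<lambda>p q. T p q * \<sigma> p * \<sigma> q"] diag by (simp add: t_def w_def mult.assoc)
  have tE: "(\<Sum>e\<in>E. t e) \<le> 4" using off_diag[of T] diag tot by (simp add: t_def)
  have t: "0 \<le> t e" "t e \<le> 1" if "e \<in> E" for e using that nn le1 by (auto simp: E_def t_def)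
  have S: "0 \<le> (\<Sum>p<n. (\<sigma> p)\<^sup>2)" by (simp add: sum_nonneg)
  show ?thesis
  proof (cases "E = {}")
    case True
    then show ?thesis unfolding form using S by simp
  next
    case False
    obtain a b where ab: "(a,b) \<in> E" and top: "\<forall>e\<in>E. w e \<le> w (a,b)"
      using finite_ex_arg_max[OF fin False, of w] by auto
    have ab': "a < n" "b < n" "a \<noteq> b" using ab by (auto simp: E_def)
    define H where "H = {(a,b), (b,a)}"
    have HE: "H \<subseteq> E" using ab' by (auto simp: H_def E_def)
    have wH: "(\<Sum>e\<in>H. w e) = 2 * (\<sigma> a * \<sigma> b)" and cardH: "card H = 2"
      using ab' by (simp_all add: H_def w_def mult.commute)
    obtain \<theta> where \<theta>: "0 \<le> \<theta>" "\<And>e. e \<in> E - H \<Longrightarrow> w e \<le> \<theta>" "\<And>e. e \<in> H \<Longrightarrow> \<theta> \<le> w e"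
      and top2: "2 * (\<sigma> a * \<sigma> b) + 2 * \<theta> \<le> sqrt 2 * (\<Sum>p<n. (\<sigma> p)\<^sup>2)"
    proof (cases "E - H = {}")
      case True
      have "2 * (\<sigma> a * \<sigma> b) \<le> (\<Sum>p\<in>{a,b}. (\<sigma> p)\<^sup>2)"
        using two_mult_le_weighted_squares[of 1 "\<sigma> a" "\<sigma> b"] ab' by simp
      also have "\<dots> \<le> (\<Sum>p<n. (\<sigma> p)\<^sup>2)" using ab' by (intro sum_squares_subset_le) auto
      also have "\<dots> \<le> sqrt 2 * (\<Sum>p<n. (\<sigma> p)\<^sup>2)" using S by (simp add: mult_le_cancel_right1)
      finally show ?thesis
        using True HE \<sigma> ab' by (intro that[of 0]) (auto simp: H_def w_def)
    next
      case False
      obtain c d where cd: "(c,d) \<in> E - H" and second: "\<forall>e\<in>E - H. w e \<le> w (c,d)"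
        using finite_ex_arg_max[OF _ False, of w] fin by auto
      have "sqrt 2 * (\<sigma> a * \<sigma> b + \<sigma> c * \<sigma> d) \<le> (\<Sum>p<n. (\<sigma> p)\<^sup>2)"
        using cd ab' by (intro sqrt2_two_edges_le_sum_squares) (auto simp: E_def H_def)
      then have "sqrt 2 * (sqrt 2 * (\<sigma> a * \<sigma> b + \<sigma> c * \<sigma> d)) \<le> sqrt 2 * (\<Sum>p<n. (\<sigma> p)\<^sup>2)"
        by (simp add: mult_left_mono)
      moreover have "sqrt 2 * (sqrt 2 * (\<sigma> a * \<sigma> b + \<sigma> c * \<sigma> d)) = 2 * (\<sigma> a * \<sigma> b) + 2 * w (c,d)"
        by (simp add: w_def mult.assoc[symmetric] distrib_left)
      moreover have "0 \<le> w (c,d)" using cd \<sigma> by (auto simp: E_def w_def)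
      moreover have "w (c,d) \<le> w e" if "e \<in> H" for e
        using that top cd by (auto simp: H_def w_def mult.commute)
      ultimately show ?thesis using second by (intro that[of "w (c,d)"]) auto
    qed
    have "(\<Sum>e\<in>E. t e * w e) \<le> (\<Sum>e\<in>H. w e) + \<theta> * ((\<Sum>e\<in>E. t e) - card H)"
      using HE t \<theta> by (intro weighted_sum_le_heaviest[OF fin HE]) auto
    also have "\<dots> \<le> 2 * (\<sigma> a * \<sigma> b) + 2 * \<theta>"
      using mult_left_mono[of "(\<Sum>e\<in>E. t e) - 2" 2 \<theta>] tE \<theta>(1) by (simp add: wH cardH mult.commute)
    finally show ?thesis unfolding form using top2 by linarith
  qed
qed

section \<open>Absolutely PPT perturbations of the identity\<close>

lemma pt_forms_bound_rank_two:
  fixes v :: "nat \<Rightarrow> complex" and u :: "nat \<Rightarrow> nat \<Rightarrow> complex"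
  assumes "\<And>s t. s < 2 \<Longrightarrow> t < 2 \<Longrightarrow> cinner (m*n) (u s) (u t) = (if s = t then 1 else 0)"
  shows "sqrt 2 * - Re (\<Sum>t<2. pt_form m n v (u t)) \<le> Re (cinner (m*n) v v)"
proof -
  obtain \<sigma> :: "nat \<Rightarrow> real" and T :: "nat \<Rightarrow> nat \<Rightarrow> real"
  where \<sigma>: "\<And>p. 0 \<le> \<sigma> p"
    and T: "\<And>p q. p < n \<Longrightarrow> q < n \<Longrightarrow> T p q = T q p \<and> 0 \<le> T p q \<and> T p q \<le> 1"
      "\<And>p. T p p = 0" "(\<Sum>p<n. \<Sum>q<n. T p q) \<le> 2 * real 2"
    and norm: "(\<Sum>p<n. (\<sigma> p)\<^sup>2) = Re (cinner (m*n) v v)"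
    and bound: "- Re (\<Sum>t<2. pt_form m n v (u t)) \<le> (\<Sum>p<n. \<Sum>q<n. T p q * \<sigma> p * \<sigma> q) / 2"
    by (rule pt_forms_schmidt_bound[where m = m and n = n and v = v]) (assumption | rule assms that)+
  have "(\<Sum>p<n. \<Sum>q<n. T p q * \<sigma> p * \<sigma> q) \<le> sqrt 2 * (\<Sum>p<n. (\<sigma> p)\<^sup>2)"
    by (rule quadratic_form_le_sqrt2_sum_squares) (use T \<sigma> in auto)
  then have "sqrt 2 * - Re (\<Sum>t<2. pt_form m n v (u t)) \<le> sqrt 2 * (sqrt 2 * (\<Sum>p<n. (\<sigma> p)\<^sup>2) / 2)"
    using bound by (intro mult_left_mono) auto
  then show ?thesis using norm by (simp add: mult.assoc[symmetric])
qed

lemma pt_forms_bound_rank_three: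
  fixes v :: "nat \<Rightarrow> complex" and u :: "nat \<Rightarrow> nat \<Rightarrow> complex"
  assumes "\<And>s t. s < 3 \<Longrightarrow> t < 3 \<Longrightarrow> cinner (m*n) (u s) (u t) = (if s = t then 1 else 0)"
  shows "- Re (\<Sum>t<3. pt_form m n v (u t)) \<le> Re (cinner (m*n) v v)"
proof -
  obtain \<sigma> :: "nat \<Rightarrow> real" and T :: "nat \<Rightarrow> nat \<Rightarrow> real"
  where \<sigma>: "\<And>p. 0 \<le> \<sigma> p"
    and T: "\<And>p q. p < n \<Longrightarrow> q < n \<Longrightarrow> T p q = T q p \<and> 0 \<le> T p q \<and> T p q \<le> 1"
      "\<And>p. T p p = 0" "(\<Sum>p<n. \<Sum>q<n. T p q) \<le> 2 * real 3"
    and norm: "(\<Sum>p<n. (\<sigma> p)\<^sup>2) = Re (cinner (m*n) v v)"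
    and bound: "- Re (\<Sum>t<3. pt_form m n v (u t)) \<le> (\<Sum>p<n. \<Sum>q<n. T p q * \<sigma> p * \<sigma> q) / 2"
    by (rule pt_forms_schmidt_bound[where m = m and n = n and v = v]) (assumption | rule assms that)+
  have "(\<Sum>p<n. \<Sum>q<n. T p q * \<sigma> p * \<sigma> q) \<le> 2 * (\<Sum>p<n. (\<sigma> p)\<^sup>2)"
    by (rule quadratic_form_le_two_sum_squares) (use T in auto)
  then show ?thesis using bound norm by simp
qed

lemma psd_diag_mat_of:
  assumes c: "\<And>i. i < d \<Longrightarrow> 0 \<le> c i"
  shows "psd_mat d (diag_mat_of d (\<lambda>i. complex_of_real (c i)))"
proof -
  define D where "D = diag_mat_of d (\<lambda>i. complex_of_real (c i))"
  have row: "(\<Sum>j<d. cnj (v $ i) * D $$ (i,j) * v $ j) = complex_of_real (c i * (cmod (v $ i))\<^sup>2)"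
    if "i < d" for i and v :: "complex vec"
  proof -
    have "(\<Sum>j<d. cnj (v $ i) * D $$ (i,j) * v $ j)
        = (\<Sum>j<d. if j = i then complex_of_real (c i) * (cnj (v $ i) * v $ i) else 0)"
      using that by (intro sum.cong refl) (simp add: D_def diag_mat_of_def)
    also have "\<dots> = complex_of_real (c i) * (cnj (v $ i) * v $ i)" using that by simp
    finally show ?thesis by (simp add: cnj_mult_self)
  qed
  have "(\<Sum>i<d. \<Sum>j<d. cnj (v $ i) * D $$ (i,j) * v $ j) = complex_of_real (\<Sum>i<d. c i * (cmod (v $ i))\<^sup>2)"
    for v :: "complex vec"
    by (simp add: row of_real_sum)
  moreover have "0 \<le> (\<Sum>i<d. c i * (cmod (v $ i))\<^sup>2)" for v :: "complex vec"
    using c by (intro sum_nonneg) simp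
  ultimately show ?thesis unfolding psd_mat_def Let_def D_def[symmetric] by (simp add: D_def diag_mat_of_def)
qed

lemma unitary_conj_diag_index:
  assumes U: "U \<in> carrier_mat d d" and ij: "i < d" "j < d"
  shows "(U * diag_mat_of d lam * adjoint_mat U) $$ (i,j) = (\<Sum>t<d. U $$ (i,t) * lam t * cnj (U $$ (j,t)))"
proof -
  have UD: "(U * diag_mat_of d lam) $$ (i,t) = U $$ (i,t) * lam t" if "t < d" for t
  proof -
    have "(U * diag_mat_of d lam) $$ (i,t) = (\<Sum>s<d. U $$ (i,s) * diag_mat_of d lam $$ (s,t))"
      using U ij that by (simp add: diag_mat_of_def scalar_prod_def atLeast0LessThan)
    also have "\<dots> = (\<Sum>s<d. if s = t then U $$ (i,s) * lam t else 0)"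
      using that by (intro sum.cong refl) (simp add: diag_mat_of_def)
    finally show ?thesis using that by simp
  qed
  have "(U * diag_mat_of d lam * adjoint_mat U) $$ (i,j) = (\<Sum>t<d. (U * diag_mat_of d lam) $$ (i,t) * adjoint_mat U $$ (t,j))"
    using U ij by (simp add: diag_mat_of_def scalar_prod_def atLeast0LessThan)
  also have "\<dots> = (\<Sum>t<d. U $$ (i,t) * lam t * cnj (U $$ (j,t)))"
    using U ij by (intro sum.cong refl) (simp add: UD)
  finally show ?thesis .
qed

lemma qform_partial_transpose_unitary_conj:
  assumes U: "U \<in> carrier_mat (m*n) (m*n)"
  shows "(\<Sum>a<m*n. \<Sum>b<m*n. cnj (v $ a) * partial_transpose m n (U * diag_mat_of (m*n) lam * adjoint_mat U) $$ (a,b) * v $ b)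
    = (\<Sum>t<m*n. lam t * pt_form m n (\<lambda>a. v $ a) (\<lambda>a. U $$ (a,t)))"
proof -
  let ?f = "\<lambda>a b t. lam t * (cnj (v $ a) * U $$ (pt_row n a b, t) * cnj (U $$ (pt_col n a b, t)) * v $ b)"
  have "cnj (v $ a) * partial_transpose m n (U * diag_mat_of (m*n) lam * adjoint_mat U) $$ (a,b) * v $ b
      = (\<Sum>t<m*n. ?f a b t)" if "a < m*n" "b < m*n" for a b
  proof -
    have "partial_transpose m n (U * diag_mat_of (m*n) lam * adjoint_mat U) $$ (a,b)
        = (\<Sum>t<m*n. U $$ (pt_row n a b, t) * lam t * cnj (U $$ (pt_col n a b, t)))"
      using that U by (simp only: partial_transpose_index unitary_conj_diag_index pt_row_less pt_col_less)
    then show ?thesis by (simp add: sum_distrib_left sum_distrib_right mult_ac)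
  qed
  then have "(\<Sum>a<m*n. \<Sum>b<m*n. cnj (v $ a) * partial_transpose m n (U * diag_mat_of (m*n) lam * adjoint_mat U) $$ (a,b) * v $ b)
      = (\<Sum>a<m*n. \<Sum>b<m*n. \<Sum>t<m*n. ?f a b t)"
    by (intro sum.cong refl) simp
  also have "\<dots> = (\<Sum>t<m*n. \<Sum>a<m*n. \<Sum>b<m*n. ?f a b t)"
    by (subst sum.swap) (intro sum.cong refl sum.swap)
  finally show ?thesis by (simp add: pt_form_def sum_distrib_left)
qed

text \<open>The columns satisfy \<open>\<Sum>\<^sub>t u\<^sub>t u\<^sub>t\<^sup>* = I\<close>, and \<open>I\<^sup>\<Gamma> = I\<close>.\<close>
lemma sum_pt_form_unitary_cols:
  assumes U: "unitary_mat (m*n) U" and n: "0 < n"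
  shows "(\<Sum>t<m*n. pt_form m n w (\<lambda>a. U $$ (a,t))) = cinner (m*n) w w"
proof -
  have Uc: "U \<in> carrier_mat (m*n) (m*n)" and UU: "U * adjoint_mat U = 1\<^sub>m (m*n)"
    using U by (auto simp: unitary_mat_def)
  have cols: "(\<Sum>t<m*n. U $$ (c,t) * cnj (U $$ (d,t))) = (if c = d then 1 else 0)"
    if "c < m*n" "d < m*n" for c d
    using arg_cong[OF UU, of "\<lambda>M. M $$ (c,d)"] Uc that by (simp add: scalar_prod_def atLeast0LessThan)
  have "(\<Sum>t<m*n. pt_form m n w (\<lambda>a. U $$ (a,t)))
      = (\<Sum>a<m*n. \<Sum>b<m*n. \<Sum>t<m*n. cnj (w a) * w b * (U $$ (pt_row n a b, t) * cnj (U $$ (pt_col n a b, t))))"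
    unfolding pt_form_def
    by (subst sum.swap, rule sum.cong[OF refl], subst sum.swap) (simp add: mult_ac)
  also have "\<dots> = (\<Sum>a<m*n. \<Sum>b<m*n. cnj (w a) * w b * (\<Sum>t<m*n. U $$ (pt_row n a b, t) * cnj (U $$ (pt_col n a b, t))))"
    by (simp add: sum_distrib_left)
  also have "\<dots> = (\<Sum>a<m*n. \<Sum>b<m*n. if b = a then cnj (w a) * w b else 0)"
    by (intro sum.cong refl) (auto simp: cols pt_row_less pt_col_less pt_row_eq_pt_col_iff[OF n])
  finally show ?thesis by (simp add: cinner_def)
qed

lemma sum_one_plus_indicator:
  fixes N r :: nat
  shows "(\<Sum>t<N. complex_of_real (1 + (if t < r then \<mu> else 0)) * g t)
    = (\<Sum>t<N. g t) + complex_of_real \<mu> * (\<Sum>t<min N r. g t)"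
proof -
  have "(\<Sum>t<N. complex_of_real (1 + (if t < r then \<mu> else 0)) * g t)
      = (\<Sum>t<N. g t) + (\<Sum>t<N. if t < r then complex_of_real \<mu> * g t else 0)"
    unfolding sum.distrib[symmetric] by (intro sum.cong refl) (simp add: distrib_right)
  also have "(\<Sum>t<N. if t < r then complex_of_real \<mu> * g t else 0)
      = (\<Sum>t\<in>{t \<in> {..<N}. t < r}. complex_of_real \<mu> * g t)"
    by (rule sum.inter_filter[symmetric]) simp
  also have "{t \<in> {..<N}. t < r} = {..<min N r}" by auto
  finally show ?thesis by (simp add: sum_distrib_left)
qed

text \<open>With \<open>u\<^sub>t\<close> the columns of \<open>U\<close>, \<open>(U (I + \<mu> P) U\<^sup>*)\<^sup>\<Gamma> = I + \<mu> \<Sum>\<^bsub>t<r\<^esub> (u\<^sub>t u\<^sub>t\<^sup>*)\<^sup>\<Gamma>\<close>.\<close>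
lemma absolutely_PPT_identity_plus_projection:
  assumes n: "0 < n" and r: "r \<le> m*n" and \<mu>: "0 \<le> \<mu>"
    and bound: "\<And>v u. (\<And>s t. s < r \<Longrightarrow> t < r \<Longrightarrow> cinner (m*n) (u s) (u t) = (if s = t then 1 else 0))
       \<Longrightarrow> \<mu> * - Re (\<Sum>t<r. pt_form m n v (u t)) \<le> Re (cinner (m*n) v v)"
  shows "absolutely_PPT m n (diag_mat_of (m*n) (\<lambda>t. complex_of_real (1 + (if t < r then \<mu> else 0))))"
    (is "absolutely_PPT m n ?\<rho>")
  unfolding absolutely_PPT_def
proof (intro conjI allI impI)
  show "psd_mat (m*n) ?\<rho>" using \<mu> by (intro psd_diag_mat_of) simp
  fix U assume U: "unitary_mat (m*n) U"
  have Uc: "U \<in> carrier_mat (m*n) (m*n)" using U by (rule unitary_mat_carrier)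
  define u where "u t = (\<lambda>a. U $$ (a,t))" for t
  have orth: "cinner (m*n) (u s) (u t) = (if s = t then 1 else 0)" if "s < r" "t < r" for s t
    using arg_cong[of _ _ "\<lambda>M. M $$ (s,t)", OF conjunct2[OF conjunct2[OF U[unfolded unitary_mat_def]]]]
      Uc that r by (simp add: u_def cinner_def scalar_prod_def atLeast0LessThan)
  have "Im q = 0 \<and> 0 \<le> Re q"
    if q: "q = (\<Sum>a<m*n. \<Sum>b<m*n. cnj (v $ a) * partial_transpose m n (U * ?\<rho> * adjoint_mat U) $$ (a,b) * v $ b)"
    for v :: "complex vec" and q
  proof -
    have "q = cinner (m*n) (\<lambda>a. v $ a) (\<lambda>a. v $ a)
        + complex_of_real \<mu> * (\<Sum>t<r. pt_form m n (\<lambda>a. v $ a) (u t))"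
      unfolding q qform_partial_transpose_unitary_conj[OF Uc] sum_one_plus_indicator
        sum_pt_form_unitary_cols[OF U n] using r by (simp add: u_def min_absorb2)
    then show ?thesis
      using bound[OF orth, of "\<lambda>a. v $ a"]
      by (simp add: cinner_self Im_sum pt_form_real algebra_simps)
  qed
  then show "psd_mat (m*n) (partial_transpose m n (U * ?\<rho> * adjoint_mat U))"
    unfolding psd_mat_def Let_def by (simp add: partial_transpose_def)
qed

theorem lemma7:
  fixes m n :: nat
  assumes "m \<ge> 2" and "n \<ge> 2"
  shows "absolutely_PPT m n (rho1 m n) \<and> absolutely_PPT m n (rho2 m n)"
proof
  have n: "0 < n" and mn: "4 \<le> m * n" using assms mult_le_mono[OF assms] by auto
  have rho1_diag: "rho1 m n = diag_mat_of (m*n) (\<lambda>t. complex_of_real (1 + (if t < 2 then sqrt 2 else 0)))"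
    unfolding rho1_def by (rule arg_cong[where f = "diag_mat_of (m*n)"]) (auto simp: add.commute)
  show "absolutely_PPT m n (rho1 m n)"
    unfolding rho1_diag
    by (intro absolutely_PPT_identity_plus_projection; use n mn pt_forms_bound_rank_two in simp)
  have rho2_diag: "rho2 m n = diag_mat_of (m*n) (\<lambda>t. complex_of_real (1 + (if t < 3 then 1 else 0)))"
    unfolding rho2_def by (rule arg_cong[where f = "diag_mat_of (m*n)"]) auto
  show "absolutely_PPT m n (rho2 m n)"
    unfolding rho2_diag
    by (intro absolutely_PPT_identity_plus_projection; use n mn pt_forms_bound_rank_three in simp)
qed

end
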